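(* Let $\rho,\rho',\sigma,\sigma'$ be density operators on a Hilbert space $\mathcal H$ with $\dim\mathcal H=d$, with $\operatorname{supp}\rho\subset\operatorname{supp}\sigma$ and $\operatorname{supp}\rho'\subset\operatorname{supp}\sigma'$. Suppose $\|\rho-\rho'\|_1\le\epsilon$, $\|\sigma-\sigma'\|_1\le\epsilon$, and $\lambda_{\min}(\sigma)\ge\epsilon$, where $\lambda_{\min}(\sigma)$ is the minimum eigenvalue of $\sigma$. Then $$|D(\rho\|\sigma)-D(\rho'\|\sigma')|\le\epsilon\Big(\frac{\log(d-1)}{2}+d\log\frac{1}{\lambda_{\min}(\sigma)}+\frac{d^2}{\lambda_{\min}(\sigma)-\epsilon}\Big)+H_b\Big(\frac\epsilon2\Big).$$
   Context: $D$ is the quantum relative entropy, $\|X\|_1=\operatorname{tr}\sqrt{X^\dagger X}$, and $H_b(p)=-p\log p-(1-p)\log(1-p)$ is the binary entropy function (logarithms natural). *)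

theory Defs
  imports "Jordan_Normal_Form.Spectral_Radius" "Jordan_Normal_Form.Schur_Decomposition"
begin

text \<open>Operators on a d-dimensional Hilbert space are modelled as complex d x d matrices.\<close>

definition mtrace :: "complex mat \<Rightarrow> complex" where
  "mtrace A = (\<Sum>i<dim_row A. A $$ (i, i))"

definition hermitian_mat :: "complex mat \<Rightarrow> bool" where
  "hermitian_mat A \<longleftrightarrow> mat_adjoint A = A"

definition unitary_mat :: "nat \<Rightarrow> complex mat \<Rightarrow> bool" where
  "unitary_mat d U \<longleftrightarrow> U \<in> carrier_mat d d \<and> U * mat_adjoint U = 1\<^sub>m d \<and> mat_adjoint U * U = 1\<^sub>m d"

definition psd_mat :: "nat \<Rightarrow> complex mat \<Rightarrow> bool" where
  "psd_mat d A \<longleftrightarrow> A \<in> carrier_mat d d \<and> hermitian_mat A \<and>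
     (\<forall>v \<in> carrier_vec d. Re (conjugate v \<bullet> (A *\<^sub>v v)) \<ge> 0)"

definition density_op :: "nat \<Rightarrow> complex mat \<Rightarrow> bool" where
  "density_op d \<rho> \<longleftrightarrow> psd_mat d \<rho> \<and> mtrace \<rho> = 1"

definition supp_op :: "nat \<Rightarrow> complex mat \<Rightarrow> complex vec set" where
  "supp_op d A = (\<lambda>v. A *\<^sub>v v) ` carrier_vec d"

definition matfun :: "nat \<Rightarrow> (real \<Rightarrow> real) \<Rightarrow> complex mat \<Rightarrow> complex mat" where
  "matfun d f A = (SOME B. \<exists>U lam. unitary_mat d U \<and>
       A = U * mat_diag d (\<lambda>i. complex_of_real (lam i)) * mat_adjoint U \<and>
       B = U * mat_diag d (\<lambda>i. complex_of_real (f (lam i))) * mat_adjoint U)"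

definition trace_norm :: "nat \<Rightarrow> complex mat \<Rightarrow> real" where
  "trace_norm d X = Re (mtrace (matfun d sqrt (mat_adjoint X * X)))"

text \<open>Quantum relative entropy D(rho||sigma) = tr rho (log rho - log sigma), natural log;
  the logarithm is taken on the support (Isabelle's ln 0 = 0), which is the standard
  convention when supp rho is contained in supp sigma.\<close>
definition rel_entropy :: "nat \<Rightarrow> complex mat \<Rightarrow> complex mat \<Rightarrow> real" where
  "rel_entropy d \<rho> \<sigma> = Re (mtrace (\<rho> * (matfun d ln \<rho> - matfun d ln \<sigma>)))"

definition lambda_min :: "complex mat \<Rightarrow> real" where
  "lambda_min A = Min (Re ` spectrum A)"

definition bin_entropy :: "real \<Rightarrow> real" where
  "bin_entropy p = - p * ln p - (1 - p) * ln (1 - p)"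

end

(* Write D(\<rho>||\<sigma>) = tr \<rho> ln \<rho> - tr \<rho> ln \<sigma>, so that D(\<rho>||\<sigma>) - D(\<rho>'||\<sigma>') is
     (tr \<rho> ln \<rho> - tr \<rho>' ln \<rho>') - tr (\<rho> - \<rho>') ln \<sigma> - tr \<rho>' (ln \<sigma> - ln \<sigma>').
   Once the operators are diagonalised, a trace tr (U diag a U* V diag b V* ) is
   sum a_i b_j |(U* V)_ij|^2, a pairing through doubly stochastic weights.
   Entropy term: with \<tau> = \<epsilon>/2 and X = (1 - \<tau>) \<rho>' + \<tau> I/d, Klein's inequality gives
   tr \<rho> ln \<rho> \<ge> tr \<rho> ln X; also tr \<rho>' ln X \<ge> tr \<rho>' ln \<rho>' + ln (1 - \<tau>), and
   tr (\<rho> - \<rho>') ln X \<ge> -\<tau> ln (d/\<tau>) because \<rho> - \<rho>' is traceless of trace norm \<le> \<epsilon> and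
   ln X has spectrum in [-ln (d/\<tau>), 0].
   Second term: ln \<sigma> has spectrum in [ln \<lambda>, 0] with \<lambda> = lambda_min \<sigma>, giving \<epsilon> ln (1/\<lambda>).
   Third term: by Weyl's inequality the spectrum of \<sigma>' lies above \<lambda> - \<epsilon>, where ln is
   1/(\<lambda> - \<epsilon>)-Lipschitz; in eigenbases of \<sigma> and \<sigma>' every entry of ln \<sigma> - ln \<sigma>' is then at most
   \<epsilon>/(\<lambda> - \<epsilon>), and summing the d^2 entries bounds tr \<rho>' (ln \<sigma> - ln \<sigma>').
   The crude entropy bound is brought into the form \<tau> ln (d - 1) + H_b(\<tau>) using the slack
   (d - 1) \<epsilon> ln (1/\<lambda>) \<ge> (d - 1) \<epsilon> ln d, as \<lambda> \<le> 1/d. *)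

theory Submission
  imports Defs
begin

section \<open>Adjoints, traces and unitary matrices\<close>

lemma mat_adjoint_dim [simp]:
  "dim_row (mat_adjoint A) = dim_col A" "dim_col (mat_adjoint A) = dim_row A"
  unfolding mat_adjoint_def by (auto simp: mat_of_rows_def)

lemma index_mat_adjoint [simp]:
  "i < dim_col A \<Longrightarrow> j < dim_row A \<Longrightarrow> mat_adjoint (A :: complex mat) $$ (i, j) = cnj (A $$ (j, i))"
  unfolding mat_adjoint_def by (simp add: mat_of_rows_def conjugate_complex_def)

lemma mat_adjoint_carrier [simp]: "A \<in> carrier_mat n m \<Longrightarrow> mat_adjoint A \<in> carrier_mat m n"
  unfolding carrier_mat_def by simp

lemma mat_adjoint_mat_adjoint [simp]: "mat_adjoint (mat_adjoint (A :: complex mat)) = A"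
  by (rule eq_matI) simp_all

lemma mat_adjoint_one [simp]: "mat_adjoint (1\<^sub>m n :: complex mat) = 1\<^sub>m n"
  by (rule eq_matI) simp_all

declare index_mult_mat(1) [simp del]

lemma mult_carrier_mat_square [simp]:
  "A \<in> carrier_mat n n \<Longrightarrow> B \<in> carrier_mat n n \<Longrightarrow> A * B \<in> carrier_mat n n"
  by (rule mult_carrier_mat)

lemma index_mult_mat_sum:
  assumes "A \<in> carrier_mat n m" and "B \<in> carrier_mat m p" and "i < n" and "j < p"
  shows "(A * B) $$ (i, j) = (\<Sum>k<m. A $$ (i, k) * B $$ (k, j))"
  using assms by (simp add: index_mult_mat(1) scalar_prod_def atLeast0LessThan)

lemma mat_adjoint_mult:
  assumes A: "(A :: complex mat) \<in> carrier_mat n m" and B: "B \<in> carrier_mat m p"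
  shows "mat_adjoint (A * B) = mat_adjoint B * mat_adjoint A"
proof (rule eq_matI)
  fix i j assume "i < dim_row (mat_adjoint B * mat_adjoint A)" "j < dim_col (mat_adjoint B * mat_adjoint A)"
  then have i: "i < p" and j: "j < n" using A B by auto
  have "mat_adjoint (A * B) $$ (i, j) = cnj (\<Sum>k<m. A $$ (j, k) * B $$ (k, i))"
    using A B i j by (simp add: index_mult_mat_sum)
  also have "\<dots> = (\<Sum>k<m. mat_adjoint B $$ (i, k) * mat_adjoint A $$ (k, j))"
    unfolding cnj_sum using A B i j by (intro sum.cong) (auto simp: mult.commute)
  also have "\<dots> = (mat_adjoint B * mat_adjoint A) $$ (i, j)"
    by (rule index_mult_mat_sum[symmetric]) (use A B i j in auto)
  finally show "mat_adjoint (A * B) $$ (i, j) = (mat_adjoint B * mat_adjoint A) $$ (i, j)" .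
qed (use A B in simp_all)

lemma mat_adjoint_minus:
  assumes "(A :: complex mat) \<in> carrier_mat n m" and "B \<in> carrier_mat n m"
  shows "mat_adjoint (A - B) = mat_adjoint A - mat_adjoint B"
  using assms by (intro eq_matI) auto

lemma mult_minus_mult_distrib:
  fixes P :: "'a :: ring mat"
  assumes "P \<in> carrier_mat n n" "A \<in> carrier_mat n n" "B \<in> carrier_mat n n" "Q \<in> carrier_mat n n"
  shows "P * (A - B) * Q = P * A * Q - P * B * Q"
  using assms by (simp add: mult_minus_distrib_mat[of P n n A n B] minus_mult_distrib_mat[of _ n n _ Q n])

lemma hermitian_mat_minus:
  assumes "A \<in> carrier_mat n n" "hermitian_mat A" "B \<in> carrier_mat n n" "hermitian_mat B"
  shows "hermitian_mat (A - B)"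
  using assms mat_adjoint_minus[of A n n B] unfolding hermitian_mat_def by simp

lemma hermitian_mat_index_sym:
  assumes "A \<in> carrier_mat n n" and "hermitian_mat A" and "i < n" and "j < n"
  shows "A $$ (i, j) = cnj (A $$ (j, i))"
  using assms unfolding hermitian_mat_def by (metis carrier_matD index_mat_adjoint)

lemma hermitian_mat_adjoint_mult_mult:
  assumes "A \<in> carrier_mat n n" and "hermitian_mat A" and "W \<in> carrier_mat n n"
  shows "hermitian_mat (mat_adjoint W * A * W)"
  using assms unfolding hermitian_mat_def
  by (simp add: mat_adjoint_mult[of _ n n _ n] assoc_mult_mat[of "mat_adjoint W" n n A n W n])

lemma mtrace_eq_sum: "A \<in> carrier_mat n n \<Longrightarrow> mtrace A = (\<Sum>i<n. A $$ (i, i))"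
  unfolding mtrace_def by simp

lemma mtrace_mult_comm:
  assumes A: "A \<in> carrier_mat n m" and B: "B \<in> carrier_mat m n"
  shows "mtrace (A * B) = mtrace (B * A)"
proof -
  have "mtrace (A * B) = (\<Sum>i<n. \<Sum>k<m. A $$ (i, k) * B $$ (k, i))"
    using A B by (simp add: mtrace_eq_sum[of _ n] index_mult_mat_sum)
  also have "\<dots> = (\<Sum>k<m. \<Sum>i<n. B $$ (k, i) * A $$ (i, k))"
    by (subst sum.swap) (simp add: mult.commute)
  also have "\<dots> = mtrace (B * A)"
    using A B by (simp add: mtrace_eq_sum[of _ m] index_mult_mat_sum)
  finally show ?thesis .
qed

lemma mtrace_minus:
  assumes "A \<in> carrier_mat n n" and "B \<in> carrier_mat n n"
  shows "mtrace (A - B) = mtrace A - mtrace B"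
  using assms minus_carrier_mat[OF assms(2)] by (simp add: mtrace_eq_sum[of _ n] sum_subtractf)

lemma mtrace_minus_mult:
  assumes "A \<in> carrier_mat n n" and "B \<in> carrier_mat n n" and "C \<in> carrier_mat n n"
  shows "mtrace ((A - B) * C) = mtrace (A * C) - mtrace (B * C)"
  using assms by (simp add: minus_mult_distrib_mat[of A n n B C n] mtrace_minus[of _ n])

lemma unitary_mat_carrier [simp]: "unitary_mat n U \<Longrightarrow> U \<in> carrier_mat n n"
  unfolding unitary_mat_def by simp

lemma unitary_mat_adjoint: "unitary_mat n U \<Longrightarrow> unitary_mat n (mat_adjoint U)"
  unfolding unitary_mat_def by simp

lemma unitary_mat_cancel:
  assumes W: "unitary_mat n W"
  shows "X \<in> carrier_mat n m \<Longrightarrow> W * (mat_adjoint W * X) = X"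
    and "X \<in> carrier_mat n m \<Longrightarrow> mat_adjoint W * (W * X) = X"
    and "X \<in> carrier_mat m n \<Longrightarrow> X * W * mat_adjoint W = X"
    and "X \<in> carrier_mat m n \<Longrightarrow> X * mat_adjoint W * W = X"
proof -
  have CW: "W \<in> carrier_mat n n" "mat_adjoint W \<in> carrier_mat n n" using W by auto
  have inv: "W * mat_adjoint W = 1\<^sub>m n" "mat_adjoint W * W = 1\<^sub>m n" using W unfolding unitary_mat_def by auto
  show "X \<in> carrier_mat n m \<Longrightarrow> W * (mat_adjoint W * X) = X"
    using CW by (simp flip: assoc_mult_mat[of W n n _ n X m] add: inv)
  show "X \<in> carrier_mat n m \<Longrightarrow> mat_adjoint W * (W * X) = X"
    using CW by (simp flip: assoc_mult_mat[of "mat_adjoint W" n n _ n X m] add: inv)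
  show "X \<in> carrier_mat m n \<Longrightarrow> X * W * mat_adjoint W = X"
    using CW by (simp add: assoc_mult_mat[of X m n W n "mat_adjoint W" n] inv)
  show "X \<in> carrier_mat m n \<Longrightarrow> X * mat_adjoint W * W = X"
    using CW by (simp add: assoc_mult_mat[of X m n "mat_adjoint W" n W n] inv)
qed

lemma unitary_mat_conj_cancel:
  assumes W: "unitary_mat n W" and A: "A \<in> carrier_mat n n"
  shows "W * (mat_adjoint W * A * W) * mat_adjoint W = A"
proof -
  have CW: "W \<in> carrier_mat n n" using W by simp
  have "W * (mat_adjoint W * A * W) * mat_adjoint W = W * (mat_adjoint W * (A * W)) * mat_adjoint W"
    using A CW by (simp add: assoc_mult_mat[of "mat_adjoint W" n n A n W n])
  also have "W * (mat_adjoint W * (A * W)) = A * W"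
    using A CW by (simp add: unitary_mat_cancel(1)[OF W, of "A * W" n])
  also have "A * W * mat_adjoint W = A" by (rule unitary_mat_cancel(3)[OF W A])
  finally show ?thesis .
qed

lemma unitary_mat_mult:
  assumes U: "unitary_mat n U" and V: "unitary_mat n V"
  shows "unitary_mat n (U * V)"
proof -
  have C: "U \<in> carrier_mat n n" "V \<in> carrier_mat n n" using U V by auto
  have "U * V * mat_adjoint (U * V) = U * (V * (mat_adjoint V * mat_adjoint U))"
    using C mult_carrier_mat[of "mat_adjoint V" n n "mat_adjoint U" n]
    by (simp add: mat_adjoint_mult assoc_mult_mat[of U n n V n _ n])
  also have "\<dots> = 1\<^sub>m n"
    using U C by (simp add: unitary_mat_cancel(1)[OF V mat_adjoint_carrier[OF C(1)]] unitary_mat_def)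
  finally have right: "U * V * mat_adjoint (U * V) = 1\<^sub>m n" .
  have "mat_adjoint (U * V) * (U * V) = mat_adjoint V * (mat_adjoint U * (U * V))"
    using C mult_carrier_mat[of U n n V n]
    by (simp add: mat_adjoint_mult assoc_mult_mat[of "mat_adjoint V" n n "mat_adjoint U" n _ n])
  also have "\<dots> = 1\<^sub>m n"
    using V C by (simp add: unitary_mat_cancel(2)[OF U C(2)] unitary_mat_def)
  finally show ?thesis using right C unfolding unitary_mat_def by simp
qed

lemma unitary_mat_rows:
  assumes U: "unitary_mat n U" and "i < n" and "j < n"
  shows "(\<Sum>k<n. U $$ (i, k) * cnj (U $$ (j, k))) = (if i = j then 1 else 0)"
proof -
  have "(U * mat_adjoint U) $$ (i, j) = (\<Sum>k<n. U $$ (i, k) * cnj (U $$ (j, k)))"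
    using assms carrier_matD[OF unitary_mat_carrier[OF U]]
    by (auto simp: index_mult_mat_sum[of U n n "mat_adjoint U" n] intro!: sum.cong)
  then show ?thesis using assms unfolding unitary_mat_def by simp
qed

lemma unitary_mat_cols:
  assumes U: "unitary_mat n U" and "i < n" and "j < n"
  shows "(\<Sum>k<n. cnj (U $$ (k, i)) * U $$ (k, j)) = (if i = j then 1 else 0)"
proof -
  have "(mat_adjoint U * U) $$ (i, j) = (\<Sum>k<n. cnj (U $$ (k, i)) * U $$ (k, j))"
    using assms carrier_matD[OF unitary_mat_carrier[OF U]]
    by (auto simp: index_mult_mat_sum[of "mat_adjoint U" n n U n] intro!: sum.cong)
  then show ?thesis using assms unfolding unitary_mat_def by simp
qed

lemma unitary_mat_row_norm:
  assumes "unitary_mat n U" and "i < n"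
  shows "(\<Sum>k<n. (cmod (U $$ (i, k)))\<^sup>2) = 1"
proof -
  have "complex_of_real (\<Sum>k<n. (cmod (U $$ (i, k)))\<^sup>2) = 1"
    using unitary_mat_rows[OF assms assms(2)] by (simp only: of_real_sum complex_norm_square) simp
  then show ?thesis by (metis of_real_eq_1_iff)
qed

lemma unitary_mat_col_norm:
  assumes "unitary_mat n U" and "i < n"
  shows "(\<Sum>k<n. (cmod (U $$ (k, i)))\<^sup>2) = 1"
proof -
  have "complex_of_real (\<Sum>k<n. (cmod (U $$ (k, i)))\<^sup>2) = 1"
    using unitary_mat_cols[OF assms assms(2)]
    by (simp only: of_real_sum complex_norm_square mult.commute[of _ "cnj _"]) simp
  then show ?thesis by (metis of_real_eq_1_iff)
qed

lemma cmod_unitary_mat_index_le_1: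
  assumes "unitary_mat n U" and "i < n" and "j < n"
  shows "cmod (U $$ (i, j)) \<le> 1"
proof -
  have "(cmod (U $$ (i, j)))\<^sup>2 \<le> (\<Sum>k<n. (cmod (U $$ (i, k)))\<^sup>2)"
    using assms(3) by (intro member_le_sum) auto
  then show ?thesis using unitary_mat_row_norm[OF assms(1,2)] by (simp add: power_le_one_iff abs_le_square_iff)
qed

lemma cmod_index_adjoint_mult_mult_le:
  assumes A: "unitary_mat n A" and B: "unitary_mat n B" and Y: "Y \<in> carrier_mat n n"
    and k: "k < n" and l: "l < n"
  shows "cmod ((mat_adjoint A * Y * B) $$ (k, l)) \<le> (\<Sum>i<n. \<Sum>j<n. cmod (Y $$ (i, j)))"
proof -
  have C: "A \<in> carrier_mat n n" "B \<in> carrier_mat n n" using A B by auto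
  have "(mat_adjoint A * Y * B) $$ (k, l) = (mat_adjoint A * (Y * B)) $$ (k, l)"
    using C Y by (simp add: assoc_mult_mat[of _ n n Y n B n])
  also have "\<dots> = (\<Sum>i<n. \<Sum>j<n. cnj (A $$ (i, k)) * (Y $$ (i, j) * B $$ (j, l)))"
    using C Y k l by (auto simp: index_mult_mat_sum[of _ n n _ n] sum_distrib_left intro!: sum.cong)
  finally have "cmod ((mat_adjoint A * Y * B) $$ (k, l))
      \<le> (\<Sum>i<n. \<Sum>j<n. cmod (A $$ (i, k)) * (cmod (Y $$ (i, j)) * cmod (B $$ (j, l))))"
    by (auto simp: norm_mult intro!: order_trans[OF norm_sum] sum_mono)
  also have "\<dots> \<le> (\<Sum>i<n. \<Sum>j<n. 1 * (cmod (Y $$ (i, j)) * 1))"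
    using cmod_unitary_mat_index_le_1[OF A _ k] cmod_unitary_mat_index_le_1[OF B _ l]
    by (intro sum_mono mult_mono) auto
  finally show ?thesis by simp
qed

lemma cscalar_prod_self:
  assumes "(w :: complex vec) \<in> carrier_vec n"
  shows "w \<bullet>c w = complex_of_real (\<Sum>k<n. (cmod (w $ k))\<^sup>2)"
proof -
  have "w \<bullet>c w = (\<Sum>k<n. w $ k * cnj (w $ k))"
    using assms unfolding scalar_prod_def by (simp add: atLeast0LessThan conjugate_complex_def)
  then show ?thesis by (simp only: of_real_sum complex_norm_square)
qed

lemma cscalar_prod_self_pos:
  assumes "(w :: complex vec) \<in> carrier_vec n" and "w \<bullet>c w \<noteq> 0"
  shows "0 < (\<Sum>k<n. (cmod (w $ k))\<^sup>2)"
  using cscalar_prod_self[OF assms(1)] assms(2) sum_nonneg[of "{..<n}" "\<lambda>k. (cmod (w $ k))\<^sup>2"]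
  by (metis order_le_less of_real_0 zero_le_power2)

lemma cscalar_prod_unitary_mat_col:
  assumes W: "unitary_mat n W" and i: "i < n"
  shows "conjugate (col W i) \<bullet> col W i = 1"
proof -
  have "conjugate (col W i) \<bullet> col W i = (\<Sum>k<n. cnj (W $$ (k, i)) * W $$ (k, i))"
    unfolding scalar_prod_def using carrier_matD[OF unitary_mat_carrier[OF W]] i
    by (auto simp: atLeast0LessThan intro!: sum.cong)
  then show ?thesis using unitary_mat_cols[OF W i i] by simp
qed

lemma corthogonal_basis_extension:
  assumes v: "(v :: complex vec) \<in> carrier_vec n" and v0: "v \<noteq> 0\<^sub>v n"
  shows "\<exists>ws. set ws \<subseteq> carrier_vec n \<and> corthogonal ws \<and> length ws = n \<and> ws ! 0 = v"
proof -
  interpret cof_vec_space n "TYPE(complex)" .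
  have n: "n \<noteq> 0"
    using v v0 by (metis carrier_vecD eq_vecI index_zero_vec(2) less_nat_zero_code)
  define b where "b = basis_completion v"
  from basis_completion[OF v v0, folded b_def]
  have b: "set b \<subseteq> carrier_vec n" "distinct b" "\<not> lin_dep (set b)" "hd b = v" "length b = n"
    by auto
  then obtain vs where bv: "b = v # vs" using n by (cases b) auto
  define ws where "ws = gram_schmidt n b"
  from gram_schmidt_result[OF b(1-3) ws_def]
  have "set ws \<subseteq> carrier_vec n" "corthogonal ws" "length ws = n" using b(5) by auto
  moreover have "ws ! 0 = v"
    using gram_schmidt_hd[OF v, of vs] \<open>length ws = n\<close> n unfolding ws_def bv
    by (metis hd_conv_nth list.size(3))
  ultimately show ?thesis by blast
qed

lemma unitary_mat_of_corthogonal: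
  assumes ws: "set ws \<subseteq> carrier_vec n" "corthogonal ws" "length ws = n"
  shows "\<exists>W. unitary_mat n W \<and> (\<forall>i<n. \<exists>c. col W i = c \<cdot>\<^sub>v ws ! i)"
proof -
  define r where "r i = (\<Sum>k<n. (cmod (ws ! i $ k))\<^sup>2)" for i
  have wsc: "ws ! i \<in> carrier_vec n" if "i < n" for i using ws that by auto
  have r_eq: "ws ! i \<bullet>c ws ! i = complex_of_real (r i)" if "i < n" for i
    unfolding r_def by (rule cscalar_prod_self[OF wsc[OF that]])
  have r_pos: "0 < r i" if "i < n" for i
    unfolding r_def using ws that by (intro cscalar_prod_self_pos[OF wsc[OF that]]) (auto simp: corthogonal_def)
  define c where "c i = 1 / sqrt (r i)" for i
  define W where "W = mat n n (\<lambda>(k, i). complex_of_real (c i) * ws ! i $ k)"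
  have W: "W \<in> carrier_mat n n" unfolding W_def by simp
  have WW: "mat_adjoint W * W = 1\<^sub>m n"
  proof (rule eq_matI)
    fix i j assume "i < dim_row (1\<^sub>m n :: complex mat)" "j < dim_col (1\<^sub>m n :: complex mat)"
    then have i: "i < n" and j: "j < n" by auto
    have "(mat_adjoint W * W) $$ (i, j) = (\<Sum>k<n. complex_of_real (c i * c j) * (ws ! j $ k * cnj (ws ! i $ k)))"
      using W i j by (auto simp: index_mult_mat_sum[of _ n n _ n] W_def intro!: sum.cong)
    also have "\<dots> = complex_of_real (c i * c j) * (ws ! j \<bullet>c ws ! i)"
      using wsc[OF i] wsc[OF j]
      by (simp add: sum_distrib_left scalar_prod_def atLeast0LessThan conjugate_complex_def)
    also have "\<dots> = 1\<^sub>m n $$ (i, j)"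
    proof (cases "i = j")
      case True
      have "c i * c i * r i = 1" unfolding c_def using r_pos[OF i] by (simp add: field_simps)
      then have "complex_of_real (c i * c i) * complex_of_real (r i) = 1" by (metis of_real_1 of_real_mult)
      then show ?thesis using True r_eq[OF i] i by simp
    next
      case False
      then show ?thesis using ws i j unfolding corthogonal_def by auto
    qed
    finally show "(mat_adjoint W * W) $$ (i, j) = 1\<^sub>m n $$ (i, j)" .
  qed (use W in auto)
  have "W * mat_adjoint W = 1\<^sub>m n" by (rule mat_mult_left_right_inverse[OF _ W WW]) (use W in simp)
  then have "unitary_mat n W" unfolding unitary_mat_def using W WW by simp
  moreover have "col W i = complex_of_real (c i) \<cdot>\<^sub>v ws ! i" if "i < n" for i
    using that wsc[OF that] by (auto simp: W_def)
  ultimately show ?thesis by blast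
qed

lemma unitary_mat_first_col:
  assumes "(v :: complex vec) \<in> carrier_vec n" and "v \<noteq> 0\<^sub>v n"
  shows "\<exists>W c. unitary_mat n W \<and> col W 0 = c \<cdot>\<^sub>v v"
proof -
  obtain ws where ws: "set ws \<subseteq> carrier_vec n" "corthogonal ws" "length ws = n" "ws ! 0 = v"
    using corthogonal_basis_extension[OF assms] by blast
  have "n \<noteq> 0" using ws assms by (metis carrier_vecD eq_vecI index_zero_vec(2) less_nat_zero_code)
  then show ?thesis using unitary_mat_of_corthogonal[OF ws(1-3)] ws(4) by blast
qed

section \<open>Matrices of the form U diag(a) U*\<close>

definition real_diag :: "nat \<Rightarrow> (nat \<Rightarrow> real) \<Rightarrow> complex mat" where
  "real_diag n a = mat_diag n (\<lambda>i. complex_of_real (a i))"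

lemma real_diag_carrier [simp]: "real_diag n a \<in> carrier_mat n n"
  by (simp add: real_diag_def)

lemma real_diag_dim [simp]: "dim_row (real_diag n a) = n" "dim_col (real_diag n a) = n"
  by (simp_all add: real_diag_def mat_diag_def)

lemma index_real_diag [simp]:
  "i < n \<Longrightarrow> j < n \<Longrightarrow> real_diag n a $$ (i, j) = (if i = j then complex_of_real (a i) else 0)"
  by (simp add: real_diag_def mat_diag_def)

lemma mat_adjoint_real_diag [simp]: "mat_adjoint (real_diag n a) = real_diag n a"
  by (rule eq_matI) simp_all

lemma index_mult_real_diag_right:
  "A \<in> carrier_mat m n \<Longrightarrow> i < m \<Longrightarrow> j < n \<Longrightarrow> (A * real_diag n a) $$ (i, j) = A $$ (i, j) * a j"
  unfolding real_diag_def by (subst mat_diag_mult_right[of _ m n]) simp_all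

lemma index_mult_real_diag_left:
  "A \<in> carrier_mat n m \<Longrightarrow> i < n \<Longrightarrow> j < m \<Longrightarrow> (real_diag n a * A) $$ (i, j) = a i * A $$ (i, j)"
  unfolding real_diag_def by (subst mat_diag_mult_left[of _ n m]) simp_all

lemma real_diag_mult: "real_diag n a * real_diag n b = real_diag n (\<lambda>i. a i * b i)"
  by (rule eq_matI) (simp_all add: index_mult_real_diag_right[of _ n])

lemma index_real_diag_commutator:
  assumes "N \<in> carrier_mat n n" and "i < n" and "j < n"
  shows "(real_diag n a * N - N * real_diag n b) $$ (i, j) = N $$ (i, j) * complex_of_real (a i - b j)"
  using assms by (simp add: index_mult_real_diag_left index_mult_real_diag_right algebra_simps)

lemma mult_real_diag_comm_iff:
  assumes N: "N \<in> carrier_mat n n"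
  shows "N * real_diag n c = real_diag n d * N \<longleftrightarrow> (\<forall>i<n. \<forall>j<n. N $$ (i, j) \<noteq> 0 \<longrightarrow> c j = d i)"
proof -
  have "N * real_diag n c = real_diag n d * N \<longleftrightarrow>
      (\<forall>i<n. \<forall>j<n. N $$ (i, j) * c j = d i * N $$ (i, j))"
    using N by (auto simp: mat_eq_iff index_mult_real_diag_right index_mult_real_diag_left)
  then show ?thesis by (auto simp: mult.commute)
qed

lemma index_mult_real_diag_mult_adjoint:
  assumes "P \<in> carrier_mat n n" and "Q \<in> carrier_mat n n" and "i < n" and "j < n"
  shows "(P * real_diag n c * mat_adjoint Q) $$ (i, j) = (\<Sum>k<n. P $$ (i, k) * c k * cnj (Q $$ (j, k)))"
  using assms
  by (subst index_mult_mat_sum[of _ n n _ n]) (auto simp: index_mult_real_diag_right intro!: sum.cong)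

lemma cmod_index_mult_real_diag_mult_adjoint_le:
  assumes P: "unitary_mat n P" and Q: "unitary_mat n Q" and i: "i < n" and j: "j < n"
  shows "cmod ((P * real_diag n c * mat_adjoint Q) $$ (i, j)) \<le> (\<Sum>k<n. \<bar>c k\<bar>)"
proof -
  have "cmod ((P * real_diag n c * mat_adjoint Q) $$ (i, j))
      \<le> (\<Sum>k<n. cmod (P $$ (i, k)) * \<bar>c k\<bar> * cmod (Q $$ (j, k)))"
    using P Q i j by (auto simp: index_mult_real_diag_mult_adjoint norm_mult intro: norm_sum[THEN order_trans])
  also have "\<dots> \<le> (\<Sum>k<n. 1 * \<bar>c k\<bar> * 1)"
    using cmod_unitary_mat_index_le_1[OF P i] cmod_unitary_mat_index_le_1[OF Q j]
    by (intro sum_mono mult_mono) auto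
  finally show ?thesis by simp
qed

definition unitary_diag :: "nat \<Rightarrow> complex mat \<Rightarrow> (nat \<Rightarrow> real) \<Rightarrow> complex mat" where
  "unitary_diag n U a = U * real_diag n a * mat_adjoint U"

lemma unitary_diag_carrier [simp]: "U \<in> carrier_mat n n \<Longrightarrow> unitary_diag n U a \<in> carrier_mat n n"
  unfolding unitary_diag_def by (metis mat_adjoint_carrier mult_carrier_mat real_diag_carrier)

lemma unitary_diag_dim [simp]:
  "U \<in> carrier_mat n n \<Longrightarrow> dim_row (unitary_diag n U a) = n"
  "U \<in> carrier_mat n n \<Longrightarrow> dim_col (unitary_diag n U a) = n"
  using unitary_diag_carrier by blast+

lemma index_unitary_diag:
  assumes "U \<in> carrier_mat n n" and "i < n" and "j < n"
  shows "unitary_diag n U a $$ (i, j) = (\<Sum>k<n. U $$ (i, k) * a k * cnj (U $$ (j, k)))"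
  unfolding unitary_diag_def by (rule index_mult_real_diag_mult_adjoint[OF assms(1,1,2,3)])

lemma index_unitary_diag_diag:
  assumes "U \<in> carrier_mat n n" and "j < n"
  shows "unitary_diag n U a $$ (j, j) = complex_of_real (\<Sum>k<n. a k * (cmod (U $$ (j, k)))\<^sup>2)"
  unfolding index_unitary_diag[OF assms assms(2)] of_real_sum
  by (intro sum.cong) (simp_all only: of_real_mult complex_norm_square mult_ac)

lemma hermitian_mat_unitary_diag:
  assumes U: "U \<in> carrier_mat n n"
  shows "hermitian_mat (unitary_diag n U a)"
  unfolding hermitian_mat_def
  by (rule eq_matI) (use U in \<open>auto simp: index_unitary_diag mult_ac\<close>)

lemma mult_unitary_diag_mult_adjoint:
  assumes "P \<in> carrier_mat n n" and "B \<in> carrier_mat n n" and "Q \<in> carrier_mat n n"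
  shows "P * unitary_diag n B a * mat_adjoint Q = (P * B) * real_diag n a * mat_adjoint (Q * B)"
  unfolding unitary_diag_def mat_adjoint_mult[OF assms(3,2)]
  using assms by (simp add: assoc_mult_mat[of _ n n _ n _ n])

lemma unitary_diag_conj:
  assumes "W \<in> carrier_mat n n" and "B \<in> carrier_mat n n"
  shows "W * unitary_diag n B a * mat_adjoint W = unitary_diag n (W * B) a"
  by (subst mult_unitary_diag_mult_adjoint[OF assms assms(1)]) (simp add: unitary_diag_def)

lemma adjoint_mult_unitary_diag_mult:
  assumes P: "unitary_mat n P" and Q: "unitary_mat n Q"
  shows "mat_adjoint P * unitary_diag n P a * Q = real_diag n a * (mat_adjoint P * Q)"
    and "mat_adjoint P * unitary_diag n Q a * Q = (mat_adjoint P * Q) * real_diag n a"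
proof -
  have C: "P \<in> carrier_mat n n" "Q \<in> carrier_mat n n" using P Q by auto
  have inv: "mat_adjoint P * P = 1\<^sub>m n" "mat_adjoint Q * Q = 1\<^sub>m n"
    using P Q unfolding unitary_mat_def by auto
  have "mat_adjoint P * unitary_diag n P a * Q = (mat_adjoint P * P) * real_diag n a * (mat_adjoint P * Q)"
    unfolding unitary_diag_def using C by (simp add: assoc_mult_mat[of _ n n _ n _ n])
  then show "mat_adjoint P * unitary_diag n P a * Q = real_diag n a * (mat_adjoint P * Q)"
    using inv C by simp
  have "mat_adjoint P * unitary_diag n Q a * Q = (mat_adjoint P * Q) * real_diag n a * (mat_adjoint Q * Q)"
    unfolding unitary_diag_def using C by (simp add: assoc_mult_mat[of _ n n _ n _ n])
  then show "mat_adjoint P * unitary_diag n Q a * Q = (mat_adjoint P * Q) * real_diag n a"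
    using inv C by simp
qed

lemma cmod_index_adjoint_mult_unitary_diag_mult_le:
  assumes P: "unitary_mat n P" and Q: "unitary_mat n Q" and W: "unitary_mat n W"
    and "i < n" and "j < n"
  shows "cmod ((mat_adjoint P * unitary_diag n W \<gamma> * Q) $$ (i, j)) \<le> (\<Sum>k<n. \<bar>\<gamma> k\<bar>)"
proof -
  have "mat_adjoint P * unitary_diag n W \<gamma> * Q
      = (mat_adjoint P * W) * real_diag n \<gamma> * mat_adjoint (mat_adjoint Q * W)"
    using mult_unitary_diag_mult_adjoint[of "mat_adjoint P" n W "mat_adjoint Q" \<gamma>] P Q W by simp
  then show ?thesis
    using cmod_index_mult_real_diag_mult_adjoint_le assms
      unitary_mat_mult[OF unitary_mat_adjoint[OF P] W] unitary_mat_mult[OF unitary_mat_adjoint[OF Q] W]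
    by metis
qed

lemma unitary_diag_minus_commute:
  assumes "A \<in> carrier_mat n n" and "B \<in> carrier_mat n n" and W: "W \<in> carrier_mat n n"
    and "A - B = unitary_diag n W \<delta>"
  shows "B - A = unitary_diag n W (\<lambda>k. - \<delta> k)"
proof (rule eq_matI)
  fix i j assume "i < dim_row (unitary_diag n W (\<lambda>k. - \<delta> k))" "j < dim_col (unitary_diag n W (\<lambda>k. - \<delta> k))"
  then have i: "i < n" and j: "j < n" using W by auto
  have "(B - A) $$ (i, j) = - (A - B) $$ (i, j)" using assms(1,2) i j by simp
  then show "(B - A) $$ (i, j) = unitary_diag n W (\<lambda>k. - \<delta> k) $$ (i, j)"
    using assms i j by (simp add: index_unitary_diag sum_negf)
qed (use assms in auto)

lemma unitary_diag_zero:
  assumes "W \<in> carrier_mat n n" and "\<And>k. k < n \<Longrightarrow> \<delta> k = 0"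
  shows "unitary_diag n W \<delta> = 0\<^sub>m n n"
  using assms by (intro eq_matI) (simp_all add: index_unitary_diag)

lemma unitary_diag_mult:
  assumes W: "unitary_mat n W"
  shows "unitary_diag n W a * unitary_diag n W b = unitary_diag n W (\<lambda>i. a i * b i)"
proof -
  have CW: "W \<in> carrier_mat n n" using W by simp
  have "unitary_diag n W a * unitary_diag n W b
      = W * (real_diag n a * (mat_adjoint W * W) * real_diag n b) * mat_adjoint W"
    unfolding unitary_diag_def using CW by (simp add: assoc_mult_mat[of _ n n _ n _ n])
  then show ?thesis
    using W CW by (simp add: unitary_mat_def real_diag_mult unitary_diag_def)
qed

lemma unitary_diag_mult_col:
  assumes W: "unitary_mat n W" and i: "i < n"
  shows "unitary_diag n W a *\<^sub>v col W i = complex_of_real (a i) \<cdot>\<^sub>v col W i"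
proof -
  have CW: "W \<in> carrier_mat n n" using W by simp
  have "unitary_diag n W a *\<^sub>v col W i = col (unitary_diag n W a * W) i"
    by (rule col_mult2[symmetric]) (use CW i in auto)
  also have "unitary_diag n W a * W = W * real_diag n a"
    unfolding unitary_diag_def by (rule unitary_mat_cancel(4)[OF W, of _ n]) (use CW in simp)
  also have "col (W * real_diag n a) i = complex_of_real (a i) \<cdot>\<^sub>v col W i"
    using CW i by (intro eq_vecI) (auto simp: index_mult_real_diag_right mult.commute)
  finally show ?thesis .
qed

lemma mtrace_real_diag_mult:
  assumes "H \<in> carrier_mat n n"
  shows "mtrace (real_diag n a * H) = (\<Sum>i<n. a i * H $$ (i, i))"
  using assms by (simp add: mtrace_eq_sum[of _ n] index_mult_real_diag_left)

lemma mtrace_unitary_diag: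
  assumes W: "unitary_mat n W"
  shows "mtrace (unitary_diag n W a) = complex_of_real (\<Sum>i<n. a i)"
proof -
  have CW: "W \<in> carrier_mat n n" using W by simp
  have "mtrace (unitary_diag n W a) = mtrace (real_diag n a * mat_adjoint W * W)"
    unfolding unitary_diag_def using CW
    by (simp add: mtrace_mult_comm[of W n n] assoc_mult_mat[of _ n n _ n _ n])
  also have "\<dots> = mtrace (real_diag n a)" by (simp add: unitary_mat_cancel(4)[OF W real_diag_carrier])
  finally show ?thesis by (simp add: mtrace_eq_sum[of _ n])
qed

lemma mtrace_unitary_diag_mult:
  assumes U: "U \<in> carrier_mat n n" and V: "V \<in> carrier_mat n n"
  shows "mtrace (unitary_diag n U a * unitary_diag n V b) =
    complex_of_real (\<Sum>i<n. \<Sum>j<n. a i * b j * (cmod ((mat_adjoint U * V) $$ (i, j)))\<^sup>2)"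
proof -
  have "mtrace (unitary_diag n U a * unitary_diag n V b)
      = mtrace (real_diag n a * (mat_adjoint U * unitary_diag n V b * mat_adjoint (mat_adjoint U)))"
    unfolding unitary_diag_def[of n U a] using U V
    by (simp add: mtrace_mult_comm[of U n n] assoc_mult_mat[of _ n n _ n _ n])
  also have "\<dots> = mtrace (real_diag n a * unitary_diag n (mat_adjoint U * V) b)"
    using U V by (simp only: unitary_diag_conj mat_adjoint_carrier)
  finally show ?thesis
    using U V by (simp add: mtrace_real_diag_mult index_unitary_diag_diag sum_distrib_left mult_ac)
qed

section \<open>The spectral theorem for Hermitian matrices\<close>

lemma index_adjoint_mult_eigenvector_col:
  assumes W: "unitary_mat n W" and A: "A \<in> carrier_mat n n" and v: "v \<in> carrier_vec n"
    and ev: "A *\<^sub>v v = e \<cdot>\<^sub>v v" and col: "col W 0 = c \<cdot>\<^sub>v v" and i: "i < n"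
  shows "(mat_adjoint W * A * W) $$ (i, 0) = (if i = 0 then e else 0)"
proof -
  have CW: "W \<in> carrier_mat n n" using W by simp
  have n: "0 < n" using i by simp
  have "col (A * W) 0 = A *\<^sub>v col W 0" by (rule col_mult2) (use A CW n in auto)
  also have "\<dots> = c \<cdot>\<^sub>v (A *\<^sub>v v)" unfolding col using A v by (rule mult_mat_vec)
  also have "\<dots> = e \<cdot>\<^sub>v col W 0" unfolding ev col by (simp add: smult_smult_assoc mult.commute)
  finally have colAW: "col (A * W) 0 = e \<cdot>\<^sub>v col W 0" .
  have AW: "(A * W) $$ (k, 0) = e * W $$ (k, 0)" if "k < n" for k
  proof -
    have "(A * W) $$ (k, 0) = col (A * W) 0 $ k" using that A CW n by (simp add: index_mult_mat(1))
    then show ?thesis using that CW n by (simp add: colAW)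
  qed
  have "(mat_adjoint W * A * W) $$ (i, 0) = (mat_adjoint W * (A * W)) $$ (i, 0)"
    using A CW by (simp add: assoc_mult_mat[of _ n n A n W n])
  also have "\<dots> = (\<Sum>k<n. mat_adjoint W $$ (i, k) * (A * W) $$ (k, 0))"
    by (rule index_mult_mat_sum) (use A CW i n in auto)
  also have "\<dots> = e * (\<Sum>k<n. cnj (W $$ (k, i)) * W $$ (k, 0))"
    using CW i by (auto simp: AW sum_distrib_left mult_ac intro!: sum.cong)
  also have "\<dots> = (if i = 0 then e else 0)" using unitary_mat_cols[OF W i n] by simp
  finally show ?thesis .
qed

definition one_block_mat :: "nat \<Rightarrow> complex mat \<Rightarrow> complex mat" where
  "one_block_mat n U = mat (Suc n) (Suc n)
     (\<lambda>(i, j). if i = 0 \<and> j = 0 then 1 else if i = 0 \<or> j = 0 then 0 else U $$ (i - 1, j - 1))"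

lemma unitary_mat_one_block_mat:
  assumes U: "unitary_mat n U"
  shows "unitary_mat (Suc n) (one_block_mat n U)"
proof -
  let ?B = "one_block_mat n U"
  have CB: "?B \<in> carrier_mat (Suc n) (Suc n)" unfolding one_block_mat_def by simp
  have "?B * mat_adjoint ?B = 1\<^sub>m (Suc n)"
  proof (rule eq_matI)
    fix i j assume "i < dim_row (1\<^sub>m (Suc n) :: complex mat)" "j < dim_col (1\<^sub>m (Suc n) :: complex mat)"
    then have i: "i < Suc n" and j: "j < Suc n" by auto
    have "(?B * mat_adjoint ?B) $$ (i, j)
        = ?B $$ (i, 0) * cnj (?B $$ (j, 0)) + (\<Sum>k<n. ?B $$ (i, Suc k) * cnj (?B $$ (j, Suc k)))"
      using CB i j by (simp add: index_mult_mat_sum[of _ "Suc n" "Suc n" _ "Suc n"] sum.lessThan_Suc_shift del: sum.lessThan_Suc)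
    also have "\<dots> = 1\<^sub>m (Suc n) $$ (i, j)"
      using i j unitary_mat_rows[OF U, of "i - 1" "j - 1"]
      by (cases i; cases j) (simp_all add: one_block_mat_def)
    finally show "(?B * mat_adjoint ?B) $$ (i, j) = 1\<^sub>m (Suc n) $$ (i, j)" .
  qed (use CB in simp_all)
  moreover have "mat_adjoint ?B * ?B = 1\<^sub>m (Suc n)"
    using mat_mult_left_right_inverse[OF CB _ calculation] CB by simp
  ultimately show ?thesis using CB unfolding unitary_mat_def by simp
qed

lemma unitary_diag_one_block_mat:
  assumes A: "A \<in> carrier_mat (Suc n) (Suc n)" and hA: "hermitian_mat A"
    and col0: "\<And>i. i < Suc n \<Longrightarrow> A $$ (i, 0) = (if i = 0 then complex_of_real r else 0)"
    and block: "mat n n (\<lambda>(i, j). A $$ (Suc i, Suc j)) = unitary_diag n U a"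
    and U: "U \<in> carrier_mat n n"
  shows "A = unitary_diag (Suc n) (one_block_mat n U) (case_nat r a)"
proof -
  let ?B = "one_block_mat n U"
  have CB: "?B \<in> carrier_mat (Suc n) (Suc n)" unfolding one_block_mat_def by simp
  note sym = hermitian_mat_index_sym[OF A hA]
  show ?thesis
  proof (rule eq_matI)
    fix i j assume "i < dim_row (unitary_diag (Suc n) ?B (case_nat r a))"
      "j < dim_col (unitary_diag (Suc n) ?B (case_nat r a))"
    then have i: "i < Suc n" and j: "j < Suc n" using CB by auto
    have "unitary_diag (Suc n) ?B (case_nat r a) $$ (i, j)
        = ?B $$ (i, 0) * r * cnj (?B $$ (j, 0))
          + (\<Sum>k<n. ?B $$ (i, Suc k) * a k * cnj (?B $$ (j, Suc k)))"
      using CB i j by (simp add: index_unitary_diag sum.lessThan_Suc_shift del: sum.lessThan_Suc)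
    also have "\<dots> = A $$ (i, j)"
    proof (cases i; cases j)
      fix i' j' assume "i = Suc i'" "j = Suc j'"
      then have "A $$ (i, j) = unitary_diag n U a $$ (i', j')"
        using i j by (simp flip: block)
      then show ?thesis
        using \<open>i = Suc i'\<close> \<open>j = Suc j'\<close> i j U by (simp add: index_unitary_diag one_block_mat_def)
    qed (use i j col0 sym[of 0 j] col0[of j] in \<open>auto simp: one_block_mat_def\<close>)
    finally show "A $$ (i, j) = unitary_diag (Suc n) ?B (case_nat r a) $$ (i, j)" ..
  qed (use A CB in simp_all)
qed

lemma hermitian_mat_deflation:
  assumes A: "A \<in> carrier_mat (Suc n) (Suc n)" and hA: "hermitian_mat A"
  obtains W r where "unitary_mat (Suc n) W"
    "\<And>i. i < Suc n \<Longrightarrow> (mat_adjoint W * A * W) $$ (i, 0) = (if i = 0 then complex_of_real r else 0)"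
proof -
  obtain e v where v: "v \<in> carrier_vec (Suc n)" "v \<noteq> 0\<^sub>v (Suc n)" and ev: "A *\<^sub>v v = e \<cdot>\<^sub>v v"
    using spectrum_non_empty[OF A] A unfolding spectrum_def eigenvalue_def eigenvector_def by auto
  obtain W c where W: "unitary_mat (Suc n) W" and col: "col W 0 = c \<cdot>\<^sub>v v"
    using unitary_mat_first_col[OF v] by blast
  have col0: "(mat_adjoint W * A * W) $$ (i, 0) = (if i = 0 then e else 0)" if "i < Suc n" for i
    by (rule index_adjoint_mult_eigenvector_col[OF W A v(1) ev col that])
  have CW: "W \<in> carrier_mat (Suc n) (Suc n)" using W by simp
  then have "mat_adjoint W * A * W \<in> carrier_mat (Suc n) (Suc n)" using A by simp
  from hermitian_mat_index_sym[OF this hermitian_mat_adjoint_mult_mult[OF A hA CW], of 0 0]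
  have "cnj e = e" using col0[of 0] by simp
  then have "e = complex_of_real (Re e)" by (simp add: complex_eq_iff)
  then show ?thesis using that[OF W] col0 by metis
qed

theorem hermitian_mat_unitary_diag_exists:
  assumes "A \<in> carrier_mat n n" and "hermitian_mat A"
  shows "\<exists>U a. unitary_mat n U \<and> A = unitary_diag n U a"
  using assms
proof (induction n arbitrary: A)
  case 0
  then have "A = unitary_diag 0 (1\<^sub>m 0) (\<lambda>_. 0)" by (intro eq_matI) auto
  moreover have "unitary_mat 0 (1\<^sub>m 0)" unfolding unitary_mat_def by simp
  ultimately show ?case by blast
next
  case (Suc n)
  have A: "A \<in> carrier_mat (Suc n) (Suc n)" using Suc.prems by simp
  obtain W r where W: "unitary_mat (Suc n) W"
    and col0: "\<And>i. i < Suc n \<Longrightarrow> (mat_adjoint W * A * W) $$ (i, 0) = (if i = 0 then complex_of_real r else 0)"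
    using hermitian_mat_deflation[OF A Suc.prems(2)] by blast
  define A' where "A' = mat_adjoint W * A * W"
  have A': "A' \<in> carrier_mat (Suc n) (Suc n)" "hermitian_mat A'"
    unfolding A'_def using hermitian_mat_adjoint_mult_mult[OF A Suc.prems(2)] A W by auto
  define A3 where "A3 = mat n n (\<lambda>(i, j). A' $$ (Suc i, Suc j))"
  have "hermitian_mat A3"
    unfolding hermitian_mat_def
  proof (rule eq_matI)
    fix i j assume "i < dim_row A3" "j < dim_col A3"
    then show "mat_adjoint A3 $$ (i, j) = A3 $$ (i, j)"
      using hermitian_mat_index_sym[OF A', of "Suc i" "Suc j"] by (simp add: A3_def)
  qed (simp_all add: A3_def)
  then obtain U3 a3 where U3: "unitary_mat n U3" and A3: "A3 = unitary_diag n U3 a3"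
    using Suc.IH[of A3] unfolding A3_def by auto
  have "A' = unitary_diag (Suc n) (one_block_mat n U3) (case_nat r a3)"
    using unitary_diag_one_block_mat[OF A' _ A3[unfolded A3_def]] col0 U3 unfolding A'_def by auto
  then have "A = unitary_diag (Suc n) (W * one_block_mat n U3) (case_nat r a3)"
    using unitary_mat_conj_cancel[OF W A] unitary_mat_one_block_mat[OF U3] W
    unfolding A'_def by (simp add: unitary_diag_conj)
  then show ?case using unitary_mat_mult[OF W unitary_mat_one_block_mat[OF U3]] by blast
qed

section \<open>Doubly stochastic weights and scalar inequalities\<close>

lemma probability_le_1:
  fixes n :: nat
  assumes "\<And>i. i < n \<Longrightarrow> 0 \<le> p i" and "(\<Sum>i<n. p i) = (1 :: real)" and "i < n"
  shows "p i \<le> 1"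
proof -
  have "p i \<le> (\<Sum>j<n. p j)" by (rule member_le_sum) (use assms in auto)
  then show ?thesis using assms(2) by simp
qed

lemma mult_ln_le:
  assumes "0 \<le> (p :: real)" and "0 < x"
  shows "p * ln x \<le> p * ln p + x - p"
proof (cases "p = 0")
  case False
  then have "0 < p" using assms(1) by simp
  have "ln (x / p) \<le> x / p - 1" using \<open>0 < p\<close> assms(2) by (intro ln_le_minus_one) simp
  then have "p * (ln x - ln p) \<le> p * (x / p - 1)"
    using \<open>0 < p\<close> assms(2) by (intro mult_left_mono) (simp_all add: ln_div)
  then show ?thesis using \<open>0 < p\<close> by (simp add: algebra_simps)
qed (use assms in simp)

lemma abs_ln_diff_le:
  assumes "0 < (m :: real)" and "m \<le> a" and "m \<le> b"
  shows "\<bar>ln a - ln b\<bar> \<le> \<bar>a - b\<bar> / m"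
proof -
  have key: "ln x - ln y \<le> (x - y) / m" if "y \<le> x" and "m \<le> y" for x y
  proof -
    have "ln (x / y) \<le> x / y - 1" using that assms(1) by (intro ln_le_minus_one) simp
    then have "ln x - ln y \<le> (x - y) / y" using that assms(1) by (simp add: ln_div diff_divide_distrib)
    also have "\<dots> \<le> (x - y) / m" using that assms(1) by (simp add: frac_le)
    finally show ?thesis .
  qed
  show ?thesis
    using key[of b a] key[of a b] assms by (cases "b \<le> a") (simp_all add: abs_if)
qed

definition row_stochastic :: "nat \<Rightarrow> (nat \<Rightarrow> nat \<Rightarrow> real) \<Rightarrow> bool" where
  "row_stochastic n M \<longleftrightarrow> (\<forall>i<n. \<forall>j<n. 0 \<le> M i j) \<and> (\<forall>i<n. (\<Sum>j<n. M i j) = 1)"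

definition doubly_stochastic :: "nat \<Rightarrow> (nat \<Rightarrow> nat \<Rightarrow> real) \<Rightarrow> bool" where
  "doubly_stochastic n M \<longleftrightarrow> row_stochastic n M \<and> (\<forall>j<n. (\<Sum>i<n. M i j) = 1)"

lemma doubly_stochastic_unitary_mat:
  "unitary_mat n N \<Longrightarrow> doubly_stochastic n (\<lambda>i j. (cmod (N $$ (i, j)))\<^sup>2)"
  by (simp add: doubly_stochastic_def row_stochastic_def unitary_mat_row_norm unitary_mat_col_norm)

lemma Re_mtrace_unitary_diag_mult:
  assumes "unitary_mat n U" and "unitary_mat n V"
  shows "\<exists>M. doubly_stochastic n M \<and>
    Re (mtrace (unitary_diag n U a * unitary_diag n V b)) = (\<Sum>i<n. \<Sum>j<n. a i * b j * M i j)"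
  using assms doubly_stochastic_unitary_mat[OF unitary_mat_mult[OF unitary_mat_adjoint]]
  by (auto simp: mtrace_unitary_diag_mult)

text \<open>Klein's inequality tr(\<rho> ln X) \<le> tr(\<rho> ln \<rho>), written in eigenbases of \<rho> and X.\<close>
lemma doubly_stochastic_gibbs:
  assumes M: "doubly_stochastic n M" and p: "\<And>i. i < n \<Longrightarrow> 0 \<le> p i" "(\<Sum>i<n. p i) = 1"
    and x: "\<And>j. j < n \<Longrightarrow> 0 < x j" "(\<Sum>j<n. x j) = 1"
  shows "(\<Sum>i<n. \<Sum>j<n. p i * ln (x j) * M i j) \<le> (\<Sum>i<n. p i * ln (p i))"
proof -
  have M0: "\<And>i j. i < n \<Longrightarrow> j < n \<Longrightarrow> 0 \<le> M i j"
    and rows: "\<And>i. i < n \<Longrightarrow> (\<Sum>j<n. M i j) = 1" and cols: "\<And>j. j < n \<Longrightarrow> (\<Sum>i<n. M i j) = 1"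
    using M unfolding doubly_stochastic_def row_stochastic_def by auto
  have "(\<Sum>i<n. \<Sum>j<n. p i * ln (x j) * M i j) \<le> (\<Sum>i<n. \<Sum>j<n. (p i * ln (p i) + x j - p i) * M i j)"
    using mult_ln_le p(1) x(1) M0 by (intro sum_mono mult_right_mono) auto
  also have "\<dots> = (\<Sum>i<n. p i * ln (p i) * (\<Sum>j<n. M i j)) + (\<Sum>j<n. x j * (\<Sum>i<n. M i j))
      - (\<Sum>i<n. p i * (\<Sum>j<n. M i j))"
    by (simp add: algebra_simps sum.distrib sum_subtractf sum_distrib_left sum.swap[of "\<lambda>i j. x j * M i j"])
  also have "\<dots> = (\<Sum>i<n. p i * ln (p i))" using rows cols p(2) x(2) by simp
  finally show ?thesis .
qed

lemma row_stochastic_pairing_abs_le: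
  assumes M: "row_stochastic n M" and \<delta>: "(\<Sum>k<n. \<bar>\<delta> k\<bar>) \<le> \<epsilon>"
    and y: "\<And>j. j < n \<Longrightarrow> \<bar>y j\<bar> \<le> L" and L: "0 \<le> L"
  shows "\<bar>\<Sum>k<n. \<Sum>j<n. \<delta> k * y j * M k j\<bar> \<le> \<epsilon> * L"
proof -
  have M0: "\<And>k j. k < n \<Longrightarrow> j < n \<Longrightarrow> 0 \<le> M k j" and rows: "\<And>k. k < n \<Longrightarrow> (\<Sum>j<n. M k j) = 1"
    using M unfolding row_stochastic_def by auto
  have "\<bar>\<Sum>k<n. \<Sum>j<n. \<delta> k * y j * M k j\<bar> \<le> (\<Sum>k<n. \<Sum>j<n. \<bar>\<delta> k\<bar> * L * M k j)"
    using y M0 by (intro order_trans[OF sum_abs] sum_mono order_trans[OF sum_abs])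
      (auto simp: abs_mult intro!: mult_right_mono mult_left_mono)
  also have "\<dots> = (\<Sum>k<n. \<bar>\<delta> k\<bar> * L * (\<Sum>j<n. M k j))" by (simp add: sum_distrib_left)
  also have "\<dots> = (\<Sum>k<n. \<bar>\<delta> k\<bar> * L)" by (rule sum.cong) (simp_all add: rows)
  also have "\<dots> = (\<Sum>k<n. \<bar>\<delta> k\<bar>) * L" by (simp add: sum_distrib_right)
  also have "\<dots> \<le> \<epsilon> * L" using \<delta> L by (rule mult_right_mono)
  finally show ?thesis .
qed

text \<open>A traceless \<delta> has positive part of mass at most half its l1-norm.\<close>
lemma row_stochastic_pairing_traceless_ge:
  assumes M: "row_stochastic n M" and \<delta>: "(\<Sum>k<n. \<delta> k) = 0" "(\<Sum>k<n. \<bar>\<delta> k\<bar>) \<le> \<epsilon>"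
    and y: "\<And>j. j < n \<Longrightarrow> - L \<le> y j \<and> y j \<le> 0" and L: "0 \<le> L"
  shows "- (\<epsilon> / 2) * L \<le> (\<Sum>k<n. \<Sum>j<n. \<delta> k * y j * M k j)"
proof -
  have M0: "\<And>k j. k < n \<Longrightarrow> j < n \<Longrightarrow> 0 \<le> M k j" and rows: "\<And>k. k < n \<Longrightarrow> (\<Sum>j<n. M k j) = 1"
    using M unfolding row_stochastic_def by auto
  have "(\<Sum>k<n. max (\<delta> k) 0) = (\<Sum>k<n. (\<bar>\<delta> k\<bar> + \<delta> k) / 2)"
    by (rule sum.cong) (auto simp: max_def)
  also have "\<dots> = ((\<Sum>k<n. \<bar>\<delta> k\<bar>) + (\<Sum>k<n. \<delta> k)) / 2"
    by (simp only: sum_divide_distrib[symmetric] sum.distrib)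
  finally have pos: "(\<Sum>k<n. max (\<delta> k) 0) \<le> \<epsilon> / 2" using \<delta> by simp
  have "- (\<epsilon> / 2) * L \<le> - (\<Sum>k<n. max (\<delta> k) 0) * L"
    using mult_right_mono[OF pos L] by simp
  also have "\<dots> = (\<Sum>k<n. - (max (\<delta> k) 0 * L))"
    by (simp only: sum_distrib_right sum_negf mult_minus_left)
  also have "\<dots> = (\<Sum>k<n. - (max (\<delta> k) 0 * L) * (\<Sum>j<n. M k j))"
    by (rule sum.cong) (simp_all add: rows)
  also have "\<dots> = (\<Sum>k<n. \<Sum>j<n. - (max (\<delta> k) 0 * L) * M k j)"
    by (simp add: sum_distrib_left)
  also have "\<dots> \<le> (\<Sum>k<n. \<Sum>j<n. \<delta> k * y j * M k j)"
  proof (intro sum_mono mult_right_mono)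
    fix k j assume "k \<in> {..<n}" "j \<in> {..<n}"
    then have j: "j < n" by simp
    show "- (max (\<delta> k) 0 * L) \<le> \<delta> k * y j"
    proof (cases "0 \<le> \<delta> k")
      case True
      then show ?thesis using mult_left_mono[of "- L" "y j" "\<delta> k"] y[OF j] by simp
    next
      case False
      then show ?thesis using mult_nonpos_nonpos[of "\<delta> k" "y j"] y[OF j] by simp
    qed
  qed (use M0 in auto)
  finally show ?thesis .
qed

lemma sum_mult_ln_mixture_ge:
  fixes n :: nat
  assumes q: "\<And>j. j < n \<Longrightarrow> 0 \<le> q j" "(\<Sum>j<n. q j) = 1" and \<tau>: "0 < \<tau>" "\<tau> < 1"
  shows "(\<Sum>j<n. q j * ln (q j)) + ln (1 - \<tau>) \<le> (\<Sum>j<n. q j * ln ((1 - \<tau>) * q j + \<tau> / n))"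
proof -
  have "(\<Sum>j<n. q j * ln (q j)) + ln (1 - \<tau>) = (\<Sum>j<n. q j * (ln (1 - \<tau>) + ln (q j)))"
    using q(2) by (simp add: distrib_left sum.distrib sum_distrib_right[symmetric])
  also have "\<dots> \<le> (\<Sum>j<n. q j * ln ((1 - \<tau>) * q j + \<tau> / n))"
  proof (intro sum_mono)
    fix j assume "j \<in> {..<n}"
    then have "0 \<le> q j" using q(1) by simp
    show "q j * (ln (1 - \<tau>) + ln (q j)) \<le> q j * ln ((1 - \<tau>) * q j + \<tau> / n)"
    proof (cases "q j = 0")
      case False
      then have "ln (1 - \<tau>) + ln (q j) = ln ((1 - \<tau>) * q j)"
        using \<open>0 \<le> q j\<close> \<tau> by (simp add: ln_mult)
      also have "\<dots> \<le> ln ((1 - \<tau>) * q j + \<tau> / n)"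
        using False \<open>0 \<le> q j\<close> \<tau> by (intro ln_mono) auto
      finally show ?thesis using \<open>0 \<le> q j\<close> by (rule mult_left_mono)
    qed simp
  qed
  finally show ?thesis .
qed

lemma uniform_mixture_bounds:
  fixes n :: nat
  assumes q: "\<And>j. j < n \<Longrightarrow> 0 \<le> q j" "(\<Sum>j<n. q j) = 1" and \<tau>: "0 < \<tau>" "\<tau> < 1"
    and x_def: "x = (\<lambda>j. (1 - \<tau>) * q j + \<tau> / n)" and j: "j < n"
  shows "0 < x j" and "- ln (n / \<tau>) \<le> ln (x j)" and "ln (x j) \<le> 0" and "(\<Sum>j<n. x j) = 1"
proof -
  have n: "0 < n" using j by simp
  have "0 < \<tau> / n" using n \<tau> by simp
  moreover have lower: "\<tau> / n \<le> x j" using q(1)[OF j] \<tau> by (simp add: x_def)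
  ultimately show "0 < x j" by linarith
  have "(1 - \<tau>) * q j \<le> 1 - \<tau>" using probability_le_1[OF q j] \<tau> by (simp add: mult_left_le)
  moreover have "\<tau> / n \<le> \<tau>" using n \<tau> by (simp add: divide_le_eq)
  ultimately show "ln (x j) \<le> 0" using \<open>0 < x j\<close> by (simp add: x_def)
  have "ln (\<tau> / n) \<le> ln (x j)" using lower \<open>0 < \<tau> / n\<close> by (rule ln_mono)
  then show "- ln (n / \<tau>) \<le> ln (x j)" using n \<tau> by (simp add: ln_div)
  show "(\<Sum>j<n. x j) = 1" using q(2) n by (simp add: x_def sum.distrib sum_distrib_left[symmetric])
qed

lemma bin_entropy_nonneg:
  assumes "0 \<le> p" and "p \<le> 1"
  shows "0 \<le> bin_entropy p"
proof -
  have "x * ln x \<le> 0" if "0 \<le> x" "x \<le> 1" for x :: real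
    using that by (cases "x = 0") (auto intro: mult_nonneg_nonpos)
  from this[of p] this[of "1 - p"] assms show ?thesis unfolding bin_entropy_def by simp
qed

lemma entropy_bound_le_fannes_form:
  fixes d :: nat
  assumes d: "2 \<le> d" and \<tau>: "0 \<le> \<tau>" "\<tau> \<le> 1 / 2" and \<mu>: "0 < \<mu>" "real d * \<mu> \<le> 1"
  shows "- ln (1 - \<tau>) + \<tau> * ln (d / \<tau>)
    \<le> \<tau> * ln (real d - 1) + bin_entropy \<tau> + 2 * \<tau> * (real d - 1) * ln (1 / \<mu>)"
proof (cases "\<tau> = 0")
  case False
  then have "0 < \<tau>" using \<tau> by simp
  have "- ln (1 - \<tau>) \<le> ln 2"
    using \<tau> ln_mono[of "1 / 2" "1 - \<tau>"] by (simp add: ln_div)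
  moreover have "ln d - ln (real d - 1) \<le> ln 2"
  proof -
    have "ln d \<le> ln (2 * (real d - 1))" using d by (intro ln_mono) auto
    also have "\<dots> = ln 2 + ln (real d - 1)" using d ln_mult[of 2 "real d - 1"] by simp
    finally show ?thesis by simp
  qed
  moreover have "ln 2 \<le> (real d - 1) * ln (1 / \<mu>)"
  proof -
    have "2 * \<mu> \<le> real d * \<mu>" using d \<mu> by (intro mult_right_mono) auto
    then have "2 * \<mu> \<le> 1" using \<mu> by linarith
    then have "2 \<le> 1 / \<mu>" using \<mu> by (simp add: field_simps)
    then have "ln 2 \<le> ln (1 / \<mu>)" by (intro ln_mono) auto
    then show ?thesis using d mult_mono[of 1 "real d - 1" "ln 2" "ln (1 / \<mu>)"] by simp
  qed
  ultimately have "- ln (1 - \<tau>) + ln d - ln (real d - 1) \<le> 2 * ((real d - 1) * ln (1 / \<mu>))"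
    by linarith
  then have "\<tau> * (- ln (1 - \<tau>) + ln d - ln (real d - 1)) \<le> \<tau> * (2 * ((real d - 1) * ln (1 / \<mu>)))"
    using \<open>0 < \<tau>\<close> by (intro mult_left_mono) auto
  then show ?thesis
    using \<open>0 < \<tau>\<close> d by (simp add: bin_entropy_def ln_div algebra_simps)
qed (simp add: bin_entropy_def)

lemma continuity_bound_arith:
  fixes d :: nat and \<epsilon> \<mu> E C1 C2 :: real
  assumes d: "1 \<le> d" and \<epsilon>: "0 \<le> \<epsilon>" "\<epsilon> < \<mu>" and \<mu>: "real d * \<mu> \<le> 1"
    and E: "\<bar>E\<bar> \<le> - ln (1 - \<epsilon> / 2) + \<epsilon> / 2 * ln (d / (\<epsilon> / 2))" and E1: "d = 1 \<Longrightarrow> E = 0"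
    and C1: "\<bar>C1\<bar> \<le> \<epsilon> * ln (1 / \<mu>)" and C2: "\<bar>C2\<bar> \<le> (real d)\<^sup>2 * (\<epsilon> / (\<mu> - \<epsilon>))"
  shows "\<bar>E - C1 - C2\<bar> \<le>
    \<epsilon> * (ln (real d - 1) / 2 + real d * ln (1 / \<mu>) + (real d)\<^sup>2 / (\<mu> - \<epsilon>)) + bin_entropy (\<epsilon> / 2)"
proof -
  have "0 < \<mu>" using \<epsilon> by simp
  moreover have "1 * \<mu> \<le> real d * \<mu>" using d \<open>0 < \<mu>\<close> by (intro mult_right_mono) auto
  ultimately have "\<mu> \<le> 1" using \<mu> by linarith
  then have \<tau>: "0 \<le> \<epsilon> / 2" "\<epsilon> / 2 \<le> 1 / 2" using \<epsilon> by auto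
  have H: "0 \<le> bin_entropy (\<epsilon> / 2)" using \<tau> by (intro bin_entropy_nonneg) auto
  have C2': "(real d)\<^sup>2 * (\<epsilon> / (\<mu> - \<epsilon>)) = \<epsilon> * ((real d)\<^sup>2 / (\<mu> - \<epsilon>))" by simp
  show ?thesis
  proof (cases "d = 1")
    case True
    then show ?thesis using E1 C1 C2 C2' H by (simp add: distrib_left)
  next
    case False
    then have "2 \<le> d" using d by simp
    from entropy_bound_le_fannes_form[OF this \<tau> \<open>0 < \<mu>\<close> \<mu>]
    show ?thesis using E C1 C2 C2' by (simp add: algebra_simps)
  qed
qed

section \<open>Functional calculus, spectrum and trace norm\<close>

text \<open>N = adj V U satisfies N diag a = diag b N, so N_ij \<noteq> 0 only where a_j = b_i, and then also
  N diag (f \<circ> a) = diag (f \<circ> b) N: the value of matfun does not depend on the decomposition.\<close>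
lemma unitary_diag_eq_map:
  assumes U: "unitary_mat n U" and V: "unitary_mat n V" and eq: "unitary_diag n U a = unitary_diag n V b"
  shows "unitary_diag n U (\<lambda>i. f (a i)) = unitary_diag n V (\<lambda>i. f (b i))"
proof -
  have CU: "U \<in> carrier_mat n n" and CV: "V \<in> carrier_mat n n" using U V by auto
  have UU: "mat_adjoint U * U = 1\<^sub>m n" "U * mat_adjoint U = 1\<^sub>m n"
    and VV: "mat_adjoint V * V = 1\<^sub>m n" "V * mat_adjoint V = 1\<^sub>m n"
    using U V unfolding unitary_mat_def by auto
  define N where "N = mat_adjoint V * U"
  have CN: "N \<in> carrier_mat n n" unfolding N_def using CU CV by simp
  note assoc = assoc_mult_mat[of _ n n _ n _ n]
  have "mat_adjoint V * unitary_diag n U a * U = N * real_diag n a * (mat_adjoint U * U)"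
    unfolding unitary_diag_def N_def using CU CV by (simp add: assoc)
  moreover have "mat_adjoint V * unitary_diag n V b * U = (mat_adjoint V * V) * real_diag n b * N"
    unfolding unitary_diag_def N_def using CU CV by (simp add: assoc)
  ultimately have "N * real_diag n a = real_diag n b * N" using eq CN by (simp add: UU VV)
  then have comm: "N * real_diag n (\<lambda>i. f (a i)) = real_diag n (\<lambda>i. f (b i)) * N"
    unfolding mult_real_diag_comm_iff[OF CN] by simp
  have "V * (N * real_diag n (\<lambda>i. f (a i))) * mat_adjoint U
      = (V * mat_adjoint V) * unitary_diag n U (\<lambda>i. f (a i))"
    unfolding unitary_diag_def N_def using CU CV by (simp add: assoc)
  moreover have "V * (real_diag n (\<lambda>i. f (b i)) * N) * mat_adjoint U
      = V * real_diag n (\<lambda>i. f (b i)) * mat_adjoint V * (U * mat_adjoint U)"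
    unfolding N_def using CU CV by (simp add: assoc)
  ultimately show ?thesis
    unfolding comm using CU CV by (simp add: UU VV unitary_diag_def)
qed

lemma matfun_unitary_diag:
  assumes U: "unitary_mat n U"
  shows "matfun n f (unitary_diag n U a) = unitary_diag n U (\<lambda>i. f (a i))"
proof -
  let ?P = "\<lambda>B. \<exists>V b. unitary_mat n V \<and> unitary_diag n U a = unitary_diag n V b \<and>
    B = unitary_diag n V (\<lambda>i. f (b i))"
  have "matfun n f (unitary_diag n U a) = (SOME B. ?P B)"
    unfolding matfun_def unitary_diag_def real_diag_def ..
  moreover have "?P (unitary_diag n U (\<lambda>i. f (a i)))" using U by blast
  then have "?P (SOME B. ?P B)" by (rule someI)
  ultimately show ?thesis using unitary_diag_eq_map[OF U] by metis
qed

lemma matfun_hermitian_mat: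
  assumes "A \<in> carrier_mat n n" and "hermitian_mat A"
  obtains U a where "unitary_mat n U" "A = unitary_diag n U a"
    "matfun n f A = unitary_diag n U (\<lambda>i. f (a i))"
  using hermitian_mat_unitary_diag_exists[OF assms] matfun_unitary_diag by metis

lemma matfun_carrier:
  assumes "A \<in> carrier_mat n n" and "hermitian_mat A"
  shows "matfun n f A \<in> carrier_mat n n"
  using matfun_hermitian_mat[OF assms] by (metis unitary_diag_carrier unitary_mat_carrier)

lemma spectrum_unitary_diag:
  assumes U: "unitary_mat n U"
  shows "spectrum (unitary_diag n U a) = (\<lambda>i. complex_of_real (a i)) ` {..<n}"
proof -
  have CU: "U \<in> carrier_mat n n" using U by simp
  have "similar_mat (unitary_diag n U a) (real_diag n a)"
    using U by (intro similar_matI[where n = n]) (auto simp: unitary_diag_def unitary_mat_def)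
  then have "char_poly (unitary_diag n U a) = (\<Prod>x \<leftarrow> diag_mat (real_diag n a). [:- x, 1:])"
    by (simp add: char_poly_similar char_poly_upper_triangular[of _ n] upper_triangular_def)
  then show ?thesis
    unfolding spectrum_root_char_poly[OF unitary_diag_carrier[OF CU]]
    by (auto simp: poly_prod_list diag_mat_def)
qed

lemma lambda_min_unitary_diag:
  assumes "unitary_mat n U" and "0 < n"
  shows "lambda_min (unitary_diag n U a) = Min (a ` {..<n})"
  unfolding lambda_min_def spectrum_unitary_diag[OF assms(1)] image_image by simp

lemma lambda_min_unitary_diag_le:
  assumes "unitary_mat n U" and "i < n"
  shows "lambda_min (unitary_diag n U a) \<le> a i"
  using assms by (simp add: lambda_min_unitary_diag)

lemma lambda_min_le_index_adjoint_conj: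
  assumes S: "unitary_mat n S" and T: "unitary_mat n T" and j: "j < n"
  shows "lambda_min (unitary_diag n S s) \<le> Re ((mat_adjoint T * unitary_diag n S s * T) $$ (j, j))"
proof -
  let ?N = "mat_adjoint T * S"
  have C: "S \<in> carrier_mat n n" "T \<in> carrier_mat n n" using S T by auto
  have "lambda_min (unitary_diag n S s) = lambda_min (unitary_diag n S s) * (\<Sum>k<n. (cmod (?N $$ (j, k)))\<^sup>2)"
    using unitary_mat_row_norm[OF unitary_mat_mult[OF unitary_mat_adjoint[OF T] S] j] by simp
  also have "\<dots> \<le> (\<Sum>k<n. s k * (cmod (?N $$ (j, k)))\<^sup>2)"
    unfolding sum_distrib_left by (intro sum_mono mult_right_mono lambda_min_unitary_diag_le[OF S]) auto
  also have "\<dots> = Re ((mat_adjoint T * unitary_diag n S s * T) $$ (j, j))"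
    using unitary_diag_conj[of "mat_adjoint T" n S s] C j by (simp add: index_unitary_diag_diag)
  finally show ?thesis .
qed

lemma trace_norm_unitary_diag:
  assumes W: "unitary_mat n W"
  shows "trace_norm n (unitary_diag n W a) = (\<Sum>i<n. \<bar>a i\<bar>)"
proof -
  have "mat_adjoint (unitary_diag n W a) * unitary_diag n W a = unitary_diag n W (\<lambda>i. (\<bar>a i\<bar>)\<^sup>2)"
    using hermitian_mat_unitary_diag[of W n a] W
    by (simp add: hermitian_mat_def unitary_diag_mult power2_eq_square)
  then show ?thesis
    unfolding trace_norm_def using W by (simp add: matfun_unitary_diag mtrace_unitary_diag)
qed

lemma hermitian_mat_trace_norm:
  assumes "A \<in> carrier_mat n n" and "hermitian_mat A"
  obtains W \<delta> where "unitary_mat n W" "A = unitary_diag n W \<delta>" "trace_norm n A = (\<Sum>i<n. \<bar>\<delta> i\<bar>)"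
  using hermitian_mat_unitary_diag_exists[OF assms] trace_norm_unitary_diag by metis

lemma hermitian_mat_minus_trace_norm:
  assumes "A \<in> carrier_mat n n" "hermitian_mat A" "B \<in> carrier_mat n n" "hermitian_mat B"
  obtains W \<delta> where "unitary_mat n W" "A - B = unitary_diag n W \<delta>"
    "trace_norm n (A - B) = (\<Sum>i<n. \<bar>\<delta> i\<bar>)"
  using hermitian_mat_trace_norm[OF minus_carrier_mat[OF assms(3)] hermitian_mat_minus[OF assms]] by blast

lemma trace_norm_nonneg:
  assumes "A \<in> carrier_mat n n" and "hermitian_mat A"
  shows "0 \<le> trace_norm n A"
  using hermitian_mat_trace_norm[OF assms] by (metis abs_ge_zero sum_nonneg)

lemma hermitian_mat_trace_norm_le_0:
  assumes A: "A \<in> carrier_mat n n" "hermitian_mat A" and B: "B \<in> carrier_mat n n" "hermitian_mat B"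
    and "trace_norm n (A - B) \<le> 0"
  shows "A = B"
proof -
  obtain W \<delta> where W: "unitary_mat n W" and diff: "A - B = unitary_diag n W \<delta>"
    and "trace_norm n (A - B) = (\<Sum>i<n. \<bar>\<delta> i\<bar>)"
    using hermitian_mat_minus_trace_norm[OF A B] .
  then have "\<delta> k = 0" if "k < n" for k
    using assms(5) sum_nonneg_eq_0_iff[of "{..<n}" "\<lambda>i. \<bar>\<delta> i\<bar>"] that
    by (simp add: order_antisym[OF _ sum_nonneg])
  then have zero: "A - B = 0\<^sub>m n n" using diff W unitary_diag_zero by simp
  show ?thesis
  proof (rule eq_matI)
    fix i j assume "i < dim_row B" "j < dim_col B"
    then have "i < n" "j < n" using B by auto
    then have "(A - B) $$ (i, j) = 0" unfolding zero by simp
    then show "A $$ (i, j) = B $$ (i, j)" using A B \<open>i < n\<close> \<open>j < n\<close> by simp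
  qed (use A B in auto)
qed

lemma lambda_min_diff_le:
  assumes n: "0 < n" and \<sigma>: "\<sigma> \<in> carrier_mat n n" "hermitian_mat \<sigma>"
    and \<sigma>': "\<sigma>' \<in> carrier_mat n n" "hermitian_mat \<sigma>'" and \<epsilon>: "trace_norm n (\<sigma> - \<sigma>') \<le> \<epsilon>"
  shows "lambda_min \<sigma> - \<epsilon> \<le> lambda_min \<sigma>'"
proof -
  obtain S s where S: "unitary_mat n S" and \<sigma>_eq: "\<sigma> = unitary_diag n S s"
    using hermitian_mat_unitary_diag_exists[OF \<sigma>] by blast
  obtain T t where T: "unitary_mat n T" and \<sigma>'_eq: "\<sigma>' = unitary_diag n T t"
    using hermitian_mat_unitary_diag_exists[OF \<sigma>'] by blast
  obtain W \<gamma> where W: "unitary_mat n W" and diff: "\<sigma> - \<sigma>' = unitary_diag n W \<gamma>"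
    and "trace_norm n (\<sigma> - \<sigma>') = (\<Sum>i<n. \<bar>\<gamma> i\<bar>)"
    using hermitian_mat_minus_trace_norm[OF \<sigma> \<sigma>'] .
  then have \<gamma>: "(\<Sum>i<n. \<bar>\<gamma> i\<bar>) \<le> \<epsilon>" using \<epsilon> by simp
  have C: "T \<in> carrier_mat n n" using T by auto
  have "Min (t ` {..<n}) \<in> t ` {..<n}" using n by (intro Min_in) auto
  then obtain j where j: "j < n" and min: "lambda_min \<sigma>' = t j"
    unfolding \<sigma>'_eq lambda_min_unitary_diag[OF T n] by auto
  have "mat_adjoint T * unitary_diag n W \<gamma> * T = mat_adjoint T * \<sigma> * T - mat_adjoint T * \<sigma>' * T"
    using mult_minus_mult_distrib[of "mat_adjoint T" n \<sigma> \<sigma>' T] \<sigma> \<sigma>' C diff by simp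
  also have "mat_adjoint T * \<sigma>' * T = real_diag n t"
    unfolding \<sigma>'_eq adjoint_mult_unitary_diag_mult(1)[OF T T] using T by (simp add: unitary_mat_def)
  finally have "Re ((mat_adjoint T * \<sigma> * T) $$ (j, j)) - t j
      = Re ((mat_adjoint T * unitary_diag n W \<gamma> * T) $$ (j, j))"
    using j C \<sigma> by simp
  also have "\<dots> \<le> \<epsilon>"
    using complex_Re_le_cmod order_trans[OF cmod_index_adjoint_mult_unitary_diag_mult_le[OF T T W j j] \<gamma>]
    by (rule order_trans)
  finally show ?thesis
    using lambda_min_le_index_adjoint_conj[OF S T j, of s] min unfolding \<sigma>_eq by linarith
qed

lemma density_op_carrier: "density_op n \<rho> \<Longrightarrow> \<rho> \<in> carrier_mat n n"
  and density_op_hermitian: "density_op n \<rho> \<Longrightarrow> hermitian_mat \<rho>"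
  by (simp_all add: density_op_def psd_mat_def)

lemma density_op_unitary_diag:
  assumes "density_op n \<rho>"
  obtains U p where "unitary_mat n U" "\<rho> = unitary_diag n U p"
    "\<And>i. i < n \<Longrightarrow> 0 \<le> p i" "(\<Sum>i<n. p i) = 1"
proof -
  have C: "\<rho> \<in> carrier_mat n n" and "hermitian_mat \<rho>"
    and psd: "\<And>v. v \<in> carrier_vec n \<Longrightarrow> Re (conjugate v \<bullet> (\<rho> *\<^sub>v v)) \<ge> 0"
    and tr: "mtrace \<rho> = 1"
    using assms unfolding density_op_def psd_mat_def by auto
  then obtain U p where U: "unitary_mat n U" and \<rho>: "\<rho> = unitary_diag n U p"
    using hermitian_mat_unitary_diag_exists by blast
  have "0 \<le> p i" if i: "i < n" for i
  proof -
    have "conjugate (col U i) \<bullet> (\<rho> *\<^sub>v col U i) = complex_of_real (p i)"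
      unfolding \<rho> unitary_diag_mult_col[OF U i]
      using U i by (simp add: cscalar_prod_unitary_mat_col[OF U i])
    then show ?thesis using psd[of "col U i"] U i by simp
  qed
  moreover have "(\<Sum>i<n. p i) = 1" using tr unfolding \<rho> mtrace_unitary_diag[OF U] of_real_eq_1_iff .
  ultimately show ?thesis using that U \<rho> by blast
qed

lemma density_op_dim_pos:
  assumes "density_op n \<rho>"
  shows "0 < n"
proof (rule ccontr)
  assume "\<not> 0 < n"
  then have "\<rho> \<in> carrier_mat 0 0" using assms by (simp add: density_op_def psd_mat_def)
  then have "mtrace \<rho> = 0" by (simp add: mtrace_eq_sum[of \<rho> 0])
  then show False using assms by (simp add: density_op_def)
qed

lemma density_op_lambda_min_le:
  assumes "density_op n \<sigma>"
  shows "real n * lambda_min \<sigma> \<le> 1"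
proof -
  obtain U s where U: "unitary_mat n U" and \<sigma>: "\<sigma> = unitary_diag n U s" and "(\<Sum>i<n. s i) = 1"
    using density_op_unitary_diag[OF assms] by blast
  moreover have "(\<Sum>i<n. lambda_min \<sigma>) \<le> (\<Sum>i<n. s i)"
    unfolding \<sigma> by (intro sum_mono lambda_min_unitary_diag_le[OF U]) simp
  ultimately show ?thesis by simp
qed

lemma density_op_lambda_min_le_1:
  assumes "density_op n \<sigma>"
  shows "lambda_min \<sigma> \<le> 1"
proof -
  obtain U s where U: "unitary_mat n U" and \<sigma>: "\<sigma> = unitary_diag n U s"
    and s: "\<And>i. i < n \<Longrightarrow> 0 \<le> s i" "(\<Sum>i<n. s i) = 1"
    using density_op_unitary_diag[OF assms] by blast
  show ?thesis
    using lambda_min_unitary_diag_le[OF U density_op_dim_pos[OF assms]] probability_le_1[OF s density_op_dim_pos[OF assms]]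
    unfolding \<sigma> by (rule order_trans)
qed

section \<open>Continuity of the relative entropy\<close>

definition trace_ln :: "nat \<Rightarrow> complex mat \<Rightarrow> complex mat \<Rightarrow> real" where
  "trace_ln n \<rho> \<sigma> = Re (mtrace (\<rho> * matfun n ln \<sigma>))"

lemma rel_entropy_eq_trace_ln:
  assumes "\<rho> \<in> carrier_mat n n" "hermitian_mat \<rho>" and "\<sigma> \<in> carrier_mat n n" "hermitian_mat \<sigma>"
  shows "rel_entropy n \<rho> \<sigma> = trace_ln n \<rho> \<rho> - trace_ln n \<rho> \<sigma>"
  using assms matfun_carrier[OF assms(1,2), of ln] matfun_carrier[OF assms(3,4), of ln]
  by (simp add: rel_entropy_def trace_ln_def mult_minus_distrib_mat[of _ n n] mtrace_minus[of _ n])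

lemma trace_ln_unitary_diag:
  assumes "unitary_mat n V"
  shows "trace_ln n \<rho> (unitary_diag n V s) = Re (mtrace (\<rho> * unitary_diag n V (\<lambda>j. ln (s j))))"
  unfolding trace_ln_def matfun_unitary_diag[OF assms] ..

lemma trace_ln_self_unitary_diag:
  assumes "unitary_mat n U"
  shows "trace_ln n (unitary_diag n U p) (unitary_diag n U p) = (\<Sum>i<n. p i * ln (p i))"
  using assms by (simp add: trace_ln_unitary_diag unitary_diag_mult mtrace_unitary_diag)

lemma trace_ln_self_dim_one:
  assumes "density_op 1 \<rho>"
  shows "trace_ln 1 \<rho> \<rho> = 0"
proof -
  obtain U p where "unitary_mat 1 U" "\<rho> = unitary_diag 1 U p" "(\<Sum>i<1. p i) = 1"
    using density_op_unitary_diag[OF assms] by blast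
  then show ?thesis by (simp add: trace_ln_self_unitary_diag)
qed

lemma trace_ln_self_lower_bound:
  fixes n :: nat
  assumes U: "unitary_mat n U" and V: "unitary_mat n V" and W: "unitary_mat n W"
    and p: "\<And>i. i < n \<Longrightarrow> 0 \<le> p i" "(\<Sum>i<n. p i) = 1"
    and q: "\<And>i. i < n \<Longrightarrow> 0 \<le> q i" "(\<Sum>i<n. q i) = 1"
    and diff: "unitary_diag n U p - unitary_diag n V q = unitary_diag n W \<delta>"
    and \<delta>: "(\<Sum>k<n. \<bar>\<delta> k\<bar>) \<le> \<epsilon>" and \<tau>: "0 < \<tau>" "\<tau> < 1"
  shows "(\<Sum>i<n. q i * ln (q i)) + ln (1 - \<tau>) - \<epsilon> / 2 * ln (n / \<tau>) \<le> (\<Sum>i<n. p i * ln (p i))"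
proof -
  have n: "0 < n" using p(2) by (cases n) auto
  have C: "U \<in> carrier_mat n n" "V \<in> carrier_mat n n" "W \<in> carrier_mat n n" using U V W by auto
  define x where "x = (\<lambda>j. (1 - \<tau>) * q j + \<tau> / n)"
  have x_pos: "0 < x j" and ln_x: "- ln (n / \<tau>) \<le> ln (x j) \<and> ln (x j) \<le> 0" if "j < n" for j
    using uniform_mixture_bounds[OF _ _ \<tau> x_def that] q by auto
  have x_sum: "(\<Sum>j<n. x j) = 1"
    using uniform_mixture_bounds(4)[OF _ _ \<tau> x_def n] q by auto
  define Y where "Y = unitary_diag n V (\<lambda>j. ln (x j))"
  obtain M where M: "doubly_stochastic n M"
    and tr_p: "Re (mtrace (unitary_diag n U p * Y)) = (\<Sum>i<n. \<Sum>j<n. p i * ln (x j) * M i j)"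
    using Re_mtrace_unitary_diag_mult[OF U V] unfolding Y_def by blast
  obtain K where K: "doubly_stochastic n K"
    and tr_\<delta>: "Re (mtrace (unitary_diag n W \<delta> * Y)) = (\<Sum>k<n. \<Sum>j<n. \<delta> k * ln (x j) * K k j)"
    using Re_mtrace_unitary_diag_mult[OF W V] unfolding Y_def by blast
  have tr_q: "Re (mtrace (unitary_diag n V q * Y)) = (\<Sum>j<n. q j * ln (x j))"
    unfolding Y_def by (simp add: unitary_diag_mult[OF V] mtrace_unitary_diag[OF V])
  have split: "mtrace (unitary_diag n W \<delta> * Y) =
      mtrace (unitary_diag n U p * Y) - mtrace (unitary_diag n V q * Y)"
    unfolding diff[symmetric] Y_def using C by (intro mtrace_minus_mult) auto
  have traceless: "(\<Sum>k<n. \<delta> k) = 0"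
    using arg_cong[OF diff, of mtrace] C p(2) q(2)
    by (simp add: mtrace_minus[of _ n] mtrace_unitary_diag U V W del: of_real_sum)
  have "(\<Sum>i<n. \<Sum>j<n. p i * ln (x j) * M i j) \<le> (\<Sum>i<n. p i * ln (p i))"
    by (rule doubly_stochastic_gibbs[OF M]) (use p x_pos x_sum in auto)
  moreover have "- (\<epsilon> / 2) * ln (n / \<tau>) \<le> (\<Sum>k<n. \<Sum>j<n. \<delta> k * ln (x j) * K k j)"
    by (rule row_stochastic_pairing_traceless_ge)
      (use K traceless \<delta> ln_x n \<tau> in \<open>auto simp: doubly_stochastic_def\<close>)
  moreover have "(\<Sum>j<n. q j * ln (q j)) + ln (1 - \<tau>) \<le> (\<Sum>j<n. q j * ln (x j))"
    unfolding x_def by (rule sum_mult_ln_mixture_ge) (use q \<tau> in auto)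
  ultimately show ?thesis using tr_p tr_\<delta> tr_q split by simp
qed

lemma abs_trace_ln_self_diff_le:
  fixes n :: nat
  assumes \<rho>: "density_op n \<rho>" and \<rho>': "density_op n \<rho>'"
    and \<epsilon>: "trace_norm n (\<rho> - \<rho>') \<le> \<epsilon>" "\<epsilon> < 2"
  shows "\<bar>trace_ln n \<rho> \<rho> - trace_ln n \<rho>' \<rho>'\<bar> \<le> - ln (1 - \<epsilon> / 2) + \<epsilon> / 2 * ln (n / (\<epsilon> / 2))"
proof -
  obtain U p where U: "unitary_mat n U" and \<rho>_eq: "\<rho> = unitary_diag n U p"
    and p: "\<And>i. i < n \<Longrightarrow> 0 \<le> p i" "(\<Sum>i<n. p i) = 1"
    using density_op_unitary_diag[OF \<rho>] by blast
  obtain V q where V: "unitary_mat n V" and \<rho>'_eq: "\<rho>' = unitary_diag n V q"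
    and q: "\<And>i. i < n \<Longrightarrow> 0 \<le> q i" "(\<Sum>i<n. q i) = 1"
    using density_op_unitary_diag[OF \<rho>'] by blast
  note C = density_op_carrier[OF \<rho>] density_op_carrier[OF \<rho>']
    and H = density_op_hermitian[OF \<rho>] density_op_hermitian[OF \<rho>']
  obtain W \<delta> where W: "unitary_mat n W" and diff: "\<rho> - \<rho>' = unitary_diag n W \<delta>"
    and "trace_norm n (\<rho> - \<rho>') = (\<Sum>i<n. \<bar>\<delta> i\<bar>)"
    using hermitian_mat_minus_trace_norm[OF C(1) H(1) C(2) H(2)] .
  then have \<delta>: "(\<Sum>i<n. \<bar>\<delta> i\<bar>) \<le> \<epsilon>" using \<epsilon>(1) by simp
  show ?thesis
  proof (cases "\<epsilon> = 0")
    case True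
    then have "\<rho> = \<rho>'" using hermitian_mat_trace_norm_le_0[OF C(1) H(1) C(2) H(2)] \<epsilon>(1) by simp
    then show ?thesis using True by simp
  next
    case False
    moreover have "0 \<le> \<epsilon>" using order_trans[OF sum_nonneg \<delta>] by simp
    ultimately have \<tau>: "0 < \<epsilon> / 2" "\<epsilon> / 2 < 1" using \<epsilon>(2) by auto
    have diff': "\<rho>' - \<rho> = unitary_diag n W (\<lambda>k. - \<delta> k)"
      using unitary_diag_minus_commute[OF C _ diff] W by simp
    have "(\<Sum>i<n. q i * ln (q i)) + ln (1 - \<epsilon> / 2) - \<epsilon> / 2 * ln (n / (\<epsilon> / 2)) \<le> (\<Sum>i<n. p i * ln (p i))"
      by (rule trace_ln_self_lower_bound[OF U V W _ _ _ _ diff[unfolded \<rho>_eq \<rho>'_eq] \<delta> \<tau>])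
        (use p q in auto)
    moreover have "(\<Sum>i<n. p i * ln (p i)) + ln (1 - \<epsilon> / 2) - \<epsilon> / 2 * ln (n / (\<epsilon> / 2)) \<le> (\<Sum>i<n. q i * ln (q i))"
      by (rule trace_ln_self_lower_bound[OF V U W _ _ _ _ diff'[unfolded \<rho>_eq \<rho>'_eq] _ \<tau>])
        (use p q \<delta> in auto)
    ultimately show ?thesis
      unfolding \<rho>_eq \<rho>'_eq trace_ln_self_unitary_diag[OF U] trace_ln_self_unitary_diag[OF V] by linarith
  qed
qed

lemma abs_trace_ln_diff_left_le:
  assumes "\<rho> \<in> carrier_mat n n" "hermitian_mat \<rho>" "\<rho>' \<in> carrier_mat n n" "hermitian_mat \<rho>'"
    and \<epsilon>: "trace_norm n (\<rho> - \<rho>') \<le> \<epsilon>" and \<sigma>: "density_op n \<sigma>" and min_pos: "0 < lambda_min \<sigma>"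
  shows "\<bar>trace_ln n \<rho> \<sigma> - trace_ln n \<rho>' \<sigma>\<bar> \<le> \<epsilon> * ln (1 / lambda_min \<sigma>)"
proof -
  obtain S s where S: "unitary_mat n S" and \<sigma>_eq: "\<sigma> = unitary_diag n S s"
    and s: "\<And>i. i < n \<Longrightarrow> 0 \<le> s i" "(\<Sum>i<n. s i) = 1"
    using density_op_unitary_diag[OF \<sigma>] by blast
  obtain W \<delta> where W: "unitary_mat n W" and diff: "\<rho> - \<rho>' = unitary_diag n W \<delta>"
    and "trace_norm n (\<rho> - \<rho>') = (\<Sum>i<n. \<bar>\<delta> i\<bar>)"
    using hermitian_mat_minus_trace_norm[OF assms(1-4)] .
  then have \<delta>: "(\<Sum>i<n. \<bar>\<delta> i\<bar>) \<le> \<epsilon>" using \<epsilon> by simp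
  obtain K where K: "doubly_stochastic n K"
    and tr: "Re (mtrace (unitary_diag n W \<delta> * unitary_diag n S (\<lambda>j. ln (s j))))
      = (\<Sum>k<n. \<Sum>j<n. \<delta> k * ln (s j) * K k j)"
    using Re_mtrace_unitary_diag_mult[OF W S] by blast
  have "trace_ln n \<rho> \<sigma> - trace_ln n \<rho>' \<sigma>
      = Re (mtrace (unitary_diag n W \<delta> * unitary_diag n S (\<lambda>j. ln (s j))))"
    unfolding \<sigma>_eq trace_ln_unitary_diag[OF S] diff[symmetric]
    using assms(1,3) S by (simp add: mtrace_minus_mult)
  moreover have s_bounds: "lambda_min \<sigma> \<le> s j \<and> s j \<le> 1" if "j < n" for j
    unfolding \<sigma>_eq using lambda_min_unitary_diag_le[OF S that] probability_le_1[OF s that] by simp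
  then have "\<bar>ln (s j)\<bar> \<le> ln (1 / lambda_min \<sigma>)" if "j < n" for j
    using min_pos s_bounds[OF that] by (simp add: ln_div)
  moreover have "0 \<le> ln (1 / lambda_min \<sigma>)"
    using s_bounds[OF density_op_dim_pos[OF \<sigma>]] min_pos by simp
  ultimately show ?thesis
    using row_stochastic_pairing_abs_le[of n K \<delta> \<epsilon> "\<lambda>j. ln (s j)" "ln (1 / lambda_min \<sigma>)"] K \<delta> tr
    by (simp add: doubly_stochastic_def)
qed

text \<open>In an eigenbasis V of \<rho> the trace is a convex combination of diagonal entries of
  adj V X V = adj (adj P V) (adj P X Q) (adj Q V), whatever the unitaries P and Q.\<close>
lemma abs_Re_mtrace_density_mult_le:
  assumes \<rho>: "density_op n \<rho>" and X: "X \<in> carrier_mat n n"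
    and P: "unitary_mat n P" and Q: "unitary_mat n Q"
  shows "\<bar>Re (mtrace (\<rho> * X))\<bar> \<le> (\<Sum>i<n. \<Sum>j<n. cmod ((mat_adjoint P * X * Q) $$ (i, j)))"
    (is "_ \<le> ?S")
proof -
  obtain V q where V: "unitary_mat n V" and \<rho>_eq: "\<rho> = unitary_diag n V q"
    and q: "\<And>i. i < n \<Longrightarrow> 0 \<le> q i" "(\<Sum>i<n. q i) = 1"
    using density_op_unitary_diag[OF \<rho>] by blast
  have C: "V \<in> carrier_mat n n" "P \<in> carrier_mat n n" "Q \<in> carrier_mat n n" using V P Q by auto
  define A where "A = mat_adjoint P * V"
  define B where "B = mat_adjoint Q * V"
  have "mtrace (\<rho> * X) = mtrace (real_diag n q * (mat_adjoint V * X * V))"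
    unfolding \<rho>_eq unitary_diag_def using C X
    by (simp add: mtrace_mult_comm[of V n n] assoc_mult_mat[of _ n n _ n _ n])
  also have "mat_adjoint V * X * V = mat_adjoint A * (mat_adjoint P * X * Q) * B"
    unfolding A_def B_def using C X
    by (simp add: mat_adjoint_mult[of _ n n _ n] assoc_mult_mat[of _ n n _ n _ n]
      unitary_mat_cancel(1)[OF P, of _ n] unitary_mat_cancel(1)[OF Q, of _ n])
  finally have tr: "mtrace (\<rho> * X) = (\<Sum>k<n. q k * (mat_adjoint A * (mat_adjoint P * X * Q) * B) $$ (k, k))"
    using C X by (simp add: mtrace_real_diag_mult A_def B_def)
  have "\<bar>Re (mtrace (\<rho> * X))\<bar> \<le> (\<Sum>k<n. q k * ?S)"
    unfolding tr Re_sum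
    using q(1) cmod_index_adjoint_mult_mult_le[OF unitary_mat_mult[OF unitary_mat_adjoint[OF P] V, folded A_def]
        unitary_mat_mult[OF unitary_mat_adjoint[OF Q] V, folded B_def]] C X
    by (intro order_trans[OF sum_abs] sum_mono)
      (auto simp: abs_mult intro!: mult_left_mono order_trans[OF abs_Re_le_cmod])
  also have "\<dots> = ?S" using q(2) by (simp add: sum_distrib_right[symmetric])
  finally show ?thesis .
qed

text \<open>In the eigenbases S and T both differences become N-weighted commutators
  diag(a) N - N diag(b) with N = adj S T, whose (i, j) entry is N_ij (a_i - b_j);
  and ln is (1/m)-Lipschitz on [m, \<infinity>).\<close>
lemma cmod_index_adjoint_mult_ln_diff_le:
  assumes S: "unitary_mat n S" and T: "unitary_mat n T" and W: "unitary_mat n W"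
    and diff: "unitary_diag n S s - unitary_diag n T t = unitary_diag n W \<gamma>"
    and \<gamma>: "(\<Sum>k<n. \<bar>\<gamma> k\<bar>) \<le> \<epsilon>" and m: "0 < m"
    and s: "\<And>i. i < n \<Longrightarrow> m \<le> s i" and t: "\<And>j. j < n \<Longrightarrow> m \<le> t j"
    and i: "i < n" and j: "j < n"
  shows "cmod ((mat_adjoint S * (unitary_diag n S (\<lambda>i. ln (s i)) - unitary_diag n T (\<lambda>j. ln (t j))) * T)
    $$ (i, j)) \<le> \<epsilon> / m"
proof -
  define N where "N = mat_adjoint S * T"
  have C: "S \<in> carrier_mat n n" "T \<in> carrier_mat n n" using S T by auto
  then have CN: "N \<in> carrier_mat n n" unfolding N_def by simp
  have commutator: "mat_adjoint S * (unitary_diag n S a - unitary_diag n T b) * T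
      = real_diag n a * N - N * real_diag n b" for a b
    unfolding N_def using C by (simp add: mult_minus_mult_distrib[of _ n] adjoint_mult_unitary_diag_mult[OF S T])
  have "cmod (N $$ (i, j)) * \<bar>s i - t j\<bar> = cmod ((mat_adjoint S * unitary_diag n W \<gamma> * T) $$ (i, j))"
    unfolding diff[symmetric] commutator by (simp only: index_real_diag_commutator[OF CN i j] norm_mult norm_of_real)
  also have "\<dots> \<le> \<epsilon>" using order_trans[OF cmod_index_adjoint_mult_unitary_diag_mult_le[OF S T W i j] \<gamma>] .
  finally have N_bound: "cmod (N $$ (i, j)) * \<bar>s i - t j\<bar> \<le> \<epsilon>" .
  have "cmod ((mat_adjoint S * (unitary_diag n S (\<lambda>i. ln (s i)) - unitary_diag n T (\<lambda>j. ln (t j))) * T) $$ (i, j))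
      = cmod (N $$ (i, j)) * \<bar>ln (s i) - ln (t j)\<bar>"
    unfolding commutator by (simp only: index_real_diag_commutator[OF CN i j] norm_mult norm_of_real)
  also have "\<dots> \<le> cmod (N $$ (i, j)) * (\<bar>s i - t j\<bar> / m)"
    using abs_ln_diff_le[OF m s[OF i] t[OF j]] by (rule mult_left_mono) simp
  also have "\<dots> \<le> \<epsilon> / m" using divide_right_mono[OF N_bound, of m] m by simp
  finally show ?thesis .
qed

lemma abs_trace_ln_diff_right_le:
  assumes \<rho>: "density_op n \<rho>" and \<sigma>: "\<sigma> \<in> carrier_mat n n" "hermitian_mat \<sigma>"
    and \<sigma>': "\<sigma>' \<in> carrier_mat n n" "hermitian_mat \<sigma>'"
    and \<epsilon>: "trace_norm n (\<sigma> - \<sigma>') \<le> \<epsilon>" "\<epsilon> < lambda_min \<sigma>"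
  shows "\<bar>trace_ln n \<rho> \<sigma> - trace_ln n \<rho> \<sigma>'\<bar> \<le> (real n)\<^sup>2 * (\<epsilon> / (lambda_min \<sigma> - \<epsilon>))"
proof -
  define m where "m = lambda_min \<sigma> - \<epsilon>"
  have "0 \<le> \<epsilon>" using trace_norm_nonneg[OF minus_carrier_mat[OF \<sigma>'(1)] hermitian_mat_minus[OF \<sigma> \<sigma>']] \<epsilon>(1)
    by linarith
  then have m: "0 < m" "m \<le> lambda_min \<sigma>" "m \<le> lambda_min \<sigma>'"
    using \<epsilon> lambda_min_diff_le[OF density_op_dim_pos[OF \<rho>] \<sigma> \<sigma>' \<epsilon>(1)] unfolding m_def by auto
  obtain S s where S: "unitary_mat n S" and \<sigma>_eq: "\<sigma> = unitary_diag n S s"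
    using hermitian_mat_unitary_diag_exists[OF \<sigma>] by blast
  obtain T t where T: "unitary_mat n T" and \<sigma>'_eq: "\<sigma>' = unitary_diag n T t"
    using hermitian_mat_unitary_diag_exists[OF \<sigma>'] by blast
  obtain W \<gamma> where W: "unitary_mat n W" and diff: "\<sigma> - \<sigma>' = unitary_diag n W \<gamma>"
    and "trace_norm n (\<sigma> - \<sigma>') = (\<Sum>i<n. \<bar>\<gamma> i\<bar>)"
    using hermitian_mat_minus_trace_norm[OF \<sigma> \<sigma>'] .
  then have \<gamma>: "(\<Sum>i<n. \<bar>\<gamma> i\<bar>) \<le> \<epsilon>" using \<epsilon> by simp
  have s: "m \<le> s i" and t: "m \<le> t i" if "i < n" for i
    using m lambda_min_unitary_diag_le[OF S that, of s] lambda_min_unitary_diag_le[OF T that, of t]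
    unfolding \<sigma>_eq \<sigma>'_eq by auto
  define X where "X = unitary_diag n S (\<lambda>i. ln (s i)) - unitary_diag n T (\<lambda>j. ln (t j))"
  have C: "S \<in> carrier_mat n n" "T \<in> carrier_mat n n" "\<rho> \<in> carrier_mat n n"
    using S T density_op_carrier[OF \<rho>] by auto
  then have CX: "X \<in> carrier_mat n n" unfolding X_def by (intro minus_carrier_mat) simp
  have "trace_ln n \<rho> \<sigma> - trace_ln n \<rho> \<sigma>' = Re (mtrace (\<rho> * X))"
    unfolding \<sigma>_eq \<sigma>'_eq trace_ln_unitary_diag[OF S] trace_ln_unitary_diag[OF T] X_def
    using C by (simp add: mult_minus_distrib_mat[of \<rho> n n _ n] mtrace_minus[of _ n])
  also have "\<bar>\<dots>\<bar> \<le> (\<Sum>i<n. \<Sum>j<n. cmod ((mat_adjoint S * X * T) $$ (i, j)))"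
    by (rule abs_Re_mtrace_density_mult_le[OF \<rho> CX S T])
  also have "\<dots> \<le> (\<Sum>i<n. \<Sum>j<n. \<epsilon> / m)"
    unfolding X_def using cmod_index_adjoint_mult_ln_diff_le[OF S T W diff[unfolded \<sigma>_eq \<sigma>'_eq] \<gamma> m(1) s t]
    by (intro sum_mono) auto
  also have "\<dots> = (real n)\<^sup>2 * (\<epsilon> / m)" by (simp add: power2_eq_square)
  finally show ?thesis unfolding m_def .
qed

theorem lemma24:
  fixes d :: nat and \<rho> \<rho>' \<sigma> \<sigma>' :: "complex mat" and \<epsilon> :: real
  assumes "density_op d \<rho>" and "density_op d \<rho>'"
    and "density_op d \<sigma>" and "density_op d \<sigma>'"
    and "supp_op d \<rho> \<subseteq> supp_op d \<sigma>" and "supp_op d \<rho>' \<subseteq> supp_op d \<sigma>'"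
    and "trace_norm d (\<rho> - \<rho>') \<le> \<epsilon>" and "trace_norm d (\<sigma> - \<sigma>') \<le> \<epsilon>"
    and "lambda_min \<sigma> > \<epsilon>"
  shows "\<bar>rel_entropy d \<rho> \<sigma> - rel_entropy d \<rho>' \<sigma>'\<bar> \<le>
     \<epsilon> * (ln (real d - 1) / 2 + real d * ln (1 / lambda_min \<sigma>)
          + (real d)\<^sup>2 / (lambda_min \<sigma> - \<epsilon>))
     + bin_entropy (\<epsilon> / 2)"
proof -
  note C = assms(1-4)[THEN density_op_carrier] and H = assms(1-4)[THEN density_op_hermitian]
  have "0 \<le> \<epsilon>"
    using trace_norm_nonneg[OF minus_carrier_mat[OF C(2)] hermitian_mat_minus[OF C(1) H(1) C(2) H(2)]] assms(7)
    by linarith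
  moreover have "\<epsilon> < 2" using assms(9) density_op_lambda_min_le_1[OF assms(3)] by linarith
  moreover have "trace_ln d \<rho> \<rho> - trace_ln d \<rho>' \<rho>' = 0" if "d = 1"
    using assms(1,2) trace_ln_self_dim_one that by simp
  moreover have "rel_entropy d \<rho> \<sigma> - rel_entropy d \<rho>' \<sigma>' = (trace_ln d \<rho> \<rho> - trace_ln d \<rho>' \<rho>')
      - (trace_ln d \<rho> \<sigma> - trace_ln d \<rho>' \<sigma>) - (trace_ln d \<rho>' \<sigma> - trace_ln d \<rho>' \<sigma>')"
    using C H by (simp add: rel_entropy_eq_trace_ln)
  ultimately show ?thesis
    using continuity_bound_arith[OF _ _ assms(9) density_op_lambda_min_le[OF assms(3)]
        abs_trace_ln_self_diff_le[OF assms(1,2,7)] _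
        abs_trace_ln_diff_left_le[OF C(1) H(1) C(2) H(2) assms(7,3)]
        abs_trace_ln_diff_right_le[OF assms(2) C(3) H(3) C(4) H(4) assms(8,9)]]
      density_op_dim_pos[OF assms(1)] assms(9) by simp
qed

end
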